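(* The functional $\mathcal{E}^{\rm TF}$ is strictly convex on $\mathcal{M}^{\rm TF}$. Consequently, a minimizer of $\mathcal{E}^{\rm TF}$ over $\mathcal{M}^{\rm TF}$, if it exists, is unique.
   Context: Let $K\ge1$ be an integer and $x_1,\ldots,x_K\in\mathbb{R}^2$. Set $V_{\rm nuc}(x)=-\sum_{i=1}^K\log|x-x_i|$, $D(\sigma,\sigma)=-\frac12\iint\sigma(x)\log|x-y|\sigma(y)\,dx\,dy$, and $\mathcal{E}^{\rm TF}[\sigma]=-\int_{\mathbb{R}^2}V_{\rm nuc}\sigma+D(\sigma,\sigma)$, on $\mathcal{M}^{\rm TF}=\{\sigma\in L^\infty(\mathbb{R}^2)\cap L^1(\mathbb{R}^2,\log(2+|x|)dx):0\leq\sigma\leq1,\ \int\sigma=K\}$. *)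

theory Defs
  imports "HOL-Analysis.Analysis"
begin

type_synonym pt = "real ^ 2"

definition V_nuc :: "nat \<Rightarrow> (nat \<Rightarrow> pt) \<Rightarrow> pt \<Rightarrow> real" where
  "V_nuc K xs x = - (\<Sum>i<K. ln (norm (x - xs i)))"

definition D_TF :: "(pt \<Rightarrow> real) \<Rightarrow> real" where
  "D_TF s = - (1/2) * (\<integral>x. (\<integral>y. s x * ln (norm (x - y)) * s y \<partial>lebesgue) \<partial>lebesgue)"

definition E_TF :: "nat \<Rightarrow> (nat \<Rightarrow> pt) \<Rightarrow> (pt \<Rightarrow> real) \<Rightarrow> real" where
  "E_TF K xs s = - (\<integral>x. V_nuc K xs x * s x \<partial>lebesgue) + D_TF s"

text \<open>The admissible class M^TF (functions identified a.e. only in the statement).\<close>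
definition M_TF :: "nat \<Rightarrow> (pt \<Rightarrow> real) set" where
  "M_TF K = {s. s \<in> borel_measurable lebesgue
              \<and> (AE x in lebesgue. 0 \<le> s x \<and> s x \<le> 1)
              \<and> integrable lebesgue (\<lambda>x. s x * ln (2 + norm x))
              \<and> (\<integral>x. s x \<partial>lebesgue) = real K}"

end

theory Submission
  imports Defs
begin

text \<open>Both linear terms of the functional are affine in the density, so for a convex combination
  of two admissible densities the defect of convexity is -t (1 - t)/2 times the logarithmic
  self-energy J f = \<integral>\<integral> f x ln |x - y| f y of their difference f, which is bounded and has
  \<integral> f = 0. Frullani's integral ln a = \<integral>_0^\<infinity> (exp (-t) - exp (-t a)) / t dt at a = |x - y|^2,
  together with \<integral> f = 0, gives -2 J f = \<integral>_0^\<infinity> P t / t dt, where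
  P t = \<integral>\<integral> f x f y exp (-t |x - y|^2) is, by the semigroup identity for Gaussians, a positive
  multiple of the squared L^2 norm of a Gaussian transform of f. Hence J f \<le> 0, and J f = 0
  forces these transforms to vanish for arbitrarily narrow Gaussians. Since Gaussian averages of
  the indicator of a box converge to the indicator off its boundary, f then integrates to zero
  over every box and so vanishes almost everywhere. Uniqueness of a minimiser follows by
  testing the midpoint of two of them.\<close>

definition log_weight :: "'a::real_normed_vector \<Rightarrow> real" where
  "log_weight x = ln (2 + norm x)"

definition ln_norm_neg_part :: "'a::real_normed_vector \<Rightarrow> real" where
  "ln_norm_neg_part z = max 0 (- ln (norm z))"

lemma log_weight_ge_ln2: "ln 2 \<le> log_weight x"
  unfolding log_weight_def by (subst ln_le_cancel_iff) (auto simp: add_pos_nonneg)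

lemma log_weight_nonneg: "0 \<le> log_weight x"
  unfolding log_weight_def by (simp add: add_pos_nonneg)

lemma ln_norm_neg_part_nonneg: "0 \<le> ln_norm_neg_part z"
  unfolding ln_norm_neg_part_def by simp

lemma borel_measurable_log_weight[measurable]:
  "(log_weight :: 'a::euclidean_space \<Rightarrow> real) \<in> borel_measurable borel"
  unfolding log_weight_def by measurable

lemma borel_measurable_ln_norm_neg_part[measurable]:
  "(ln_norm_neg_part :: 'a::euclidean_space \<Rightarrow> real) \<in> borel_measurable borel"
  unfolding ln_norm_neg_part_def by measurable

lemma abs_ln_norm_diff_le:
  "\<bar>ln (norm (a - b))\<bar> \<le> ln_norm_neg_part (a - b) + log_weight a + log_weight b"
proof (cases "norm (a - b) < 1")
  case True
  then show ?thesis
    using log_weight_nonneg[of a] log_weight_nonneg[of b] ln_norm_neg_part_nonneg[of "a - b"]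
    unfolding ln_norm_neg_part_def by (cases "a = b") auto
next
  case False
  have "norm a + norm b \<le> (2 + norm a) * (2 + norm b)"
    by (simp add: algebra_simps)
  then have "norm (a - b) \<le> (2 + norm a) * (2 + norm b)"
    using norm_triangle_ineq4[of a b] by linarith
  then have "ln (norm (a - b)) \<le> ln ((2 + norm a) * (2 + norm b))"
    using False by (subst ln_le_cancel_iff) (auto simp: add_pos_nonneg)
  also have "\<dots> = ln (2 + norm a) + ln (2 + norm b)"
    by (smt (verit) ln_mult norm_ge_zero)
  finally have "ln (norm (a - b)) \<le> log_weight a + log_weight b"
    unfolding log_weight_def .
  moreover have "0 \<le> ln (norm (a - b))"
    using False by simp
  ultimately show ?thesis
    using ln_norm_neg_part_nonneg[of "a - b"] by simp
qed

definition cube :: "real \<Rightarrow> pt set" where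
  "cube r = cbox (- (r *\<^sub>R One)) (r *\<^sub>R One)"

lemma cube_borel[measurable]: "cube r \<in> sets borel"
  by (simp add: cube_def)

lemma mem_cube_if_norm_le: "norm z \<le> r \<Longrightarrow> z \<in> cube r"
  unfolding cube_def mem_box
  by (auto simp: inner_minus_left) (smt (verit) Basis_le_norm inner_commute)+

lemma norm_le_if_mem_cube: "w \<in> cube r \<Longrightarrow> norm w \<le> 2 * r"
proof -
  assume w: "w \<in> cube r"
  have "norm w \<le> (\<Sum>b\<in>(Basis::pt set). \<bar>w \<bullet> b\<bar>)"
    by (rule norm_le_l1)
  also have "\<dots> \<le> (\<Sum>b\<in>(Basis::pt set). r)"
    using w unfolding cube_def mem_box
    by (intro sum_mono) (auto simp: inner_minus_left inner_sum_Basis)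
  finally show ?thesis by simp
qed

lemma emeasure_cube: "0 \<le> r \<Longrightarrow> emeasure lborel (cube r) = ennreal ((2 * r)^2)"
proof -
  assume r: "0 \<le> r"
  have "r *\<^sub>R One - - (r *\<^sub>R One) = (2 * r) *\<^sub>R (One :: pt)"
    by (simp only: diff_minus_eq_add minus_minus mult_2 scaleR_left_distrib)
  then have "(\<Prod>b\<in>(Basis::pt set). (r *\<^sub>R One - - (r *\<^sub>R One)) \<bullet> b) = (2 * r)^2"
    by (simp add: inner_sum_Basis)
  then show ?thesis
    unfolding cube_def using r by (subst emeasure_lborel_cbox) (auto simp: inner_minus_left)
qed

lemma integrable_if_dominated_by_cubes:
  assumes g: "g \<in> borel_measurable lborel" and g0: "\<And>z. 0 \<le> g z"
    and dom: "\<And>z. ennreal (g z) \<le> (\<Sum>k. ennreal (a k) * indicator (cube (r k)) z)"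
    and a: "\<And>k. 0 \<le> a k" and r: "\<And>k. 0 \<le> r k"
    and sum: "summable (\<lambda>k. a k * (2 * r k)^2)"
  shows "integrable lborel g"
proof (rule integrableI_bounded[OF g])
  have "(\<integral>\<^sup>+z. ennreal (norm (g z)) \<partial>lborel)
      \<le> (\<integral>\<^sup>+z. (\<Sum>k. ennreal (a k) * indicator (cube (r k)) z) \<partial>lborel)"
    using g0 by (intro nn_integral_mono) (simp add: dom)
  also have "\<dots> = (\<Sum>k. \<integral>\<^sup>+z. ennreal (a k) * indicator (cube (r k)) z \<partial>lborel)"
    by (intro nn_integral_suminf) auto
  also have "\<dots> = (\<Sum>k. ennreal (a k * (2 * r k)^2))"
    using a r by (simp add: nn_integral_cmult_indicator emeasure_cube ennreal_mult)
  also have "\<dots> = ennreal (\<Sum>k. a k * (2 * r k)^2)"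
    using a r sum by (intro suminf_ennreal2) auto
  finally show "(\<integral>\<^sup>+z. ennreal (norm (g z)) \<partial>lborel) < \<infinity>"
    by (simp add: le_less_trans)
qed

lemma summable_Suc_mult_power: "0 \<le> q \<Longrightarrow> q < 1 \<Longrightarrow> summable (\<lambda>k::nat. (real k + 1) * q ^ k)"
  using geometric_deriv_sums[of q] by (simp add: sums_iff add.commute)

lemma ennreal_le_suminf: "(f :: nat \<Rightarrow> ennreal) k \<le> suminf f"
  using sum_le_suminf[of f "{k}"] by simp

lemma integrable_ln_norm_neg_part: "integrable lborel (ln_norm_neg_part :: pt \<Rightarrow> real)"
proof (rule integrable_if_dominated_by_cubes[where a = "\<lambda>k. (real k + 1) * ln 2" and r = "\<lambda>k. (1/2)^k"])
  have "(2 * (1/2::real)^k)^2 = 4 * (1/4)^k" for k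
    by (simp add: power_mult_distrib power2_eq_square flip: power_mult_distrib)
  then have "(\<lambda>k. (real k + 1) * ln 2 * (2 * (1/2::real)^k)^2) = (\<lambda>k. (4 * ln 2) * ((real k + 1) * (1/4)^k))"
    by (simp add: algebra_simps)
  then show "summable (\<lambda>k. (real k + 1) * ln 2 * (2 * (1/2::real)^k)^2)"
    by (simp add: summable_mult summable_Suc_mult_power)
  fix z :: pt
  show "ennreal (ln_norm_neg_part z) \<le> (\<Sum>k. ennreal ((real k + 1) * ln 2) * indicator (cube ((1/2)^k)) z)"
  proof (cases "0 < norm z \<and> norm z < 1")
    case False
    then have "ln_norm_neg_part z = 0"
      unfolding ln_norm_neg_part_def by auto
    then show ?thesis by simp
  next
    case True
    define l where "l = - log 2 (norm z)"
    define k where "k = nat \<lfloor>l\<rfloor>"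
    have "0 < l" using True unfolding l_def by simp
    then have kl: "real k \<le> l" "l < real k + 1"
      unfolding k_def by linarith+
    have "norm z = 2 powr (- l)"
      unfolding l_def using True by simp
    also have "\<dots> \<le> 2 powr (- real k)"
      using kl by (intro powr_mono) auto
    also have "\<dots> = (1/2)^k"
      by (simp add: powr_minus powr_realpow power_divide inverse_eq_divide)
    finally have "z \<in> cube ((1/2)^k)"
      by (rule mem_cube_if_norm_le)
    moreover have "- ln (norm z) \<le> (real k + 1) * ln 2"
      using kl unfolding l_def log_def by (simp add: field_simps)
    ultimately have "ennreal (ln_norm_neg_part z) \<le> ennreal ((real k + 1) * ln 2) * indicator (cube ((1/2)^k)) z"
      unfolding ln_norm_neg_part_def by (simp add: ennreal_leI)
    also have "\<dots> \<le> (\<Sum>k. ennreal ((real k + 1) * ln 2) * indicator (cube ((1/2)^k)) z)"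
      by (rule ennreal_le_suminf)
    finally show ?thesis .
  qed
qed (auto intro: ln_norm_neg_part_nonneg)

lemma integrable_gaussian: "0 < c \<Longrightarrow> integrable lborel (\<lambda>w::pt. exp (- c * norm w ^ 2))"
proof (rule integrable_if_dominated_by_cubes[where a = "\<lambda>k. exp (- real k)" and r = "\<lambda>k. sqrt ((real k + 1) / c)"])
  assume c: "0 < c"
  have "(\<lambda>k. exp (- real k) * (2 * sqrt ((real k + 1) / c))^2) = (\<lambda>k. (4 / c) * ((real k + 1) * exp (-1) ^ k))"
    using c by (simp add: power_mult_distrib exp_of_nat_mult[symmetric] field_simps)
  then show "summable (\<lambda>k. exp (- real k) * (2 * sqrt ((real k + 1) / c))^2)"
    by (simp add: summable_mult summable_Suc_mult_power)
  fix w :: pt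
  define k where "k = nat \<lfloor>c * norm w ^ 2\<rfloor>"
  have kl: "real k \<le> c * norm w ^ 2" "c * norm w ^ 2 < real k + 1"
    unfolding k_def using c by (simp_all add: of_nat_floor)  
  then have "norm w ^ 2 \<le> (real k + 1) / c"
    using c by (simp add: field_simps)
  then have "w \<in> cube (sqrt ((real k + 1) / c))"
    by (intro mem_cube_if_norm_le) (simp add: real_le_rsqrt)
  then have "ennreal (exp (- c * norm w ^ 2)) \<le> ennreal (exp (- real k)) * indicator (cube (sqrt ((real k + 1) / c))) w"
    using kl by (simp add: ennreal_leI)
  also have "\<dots> \<le> (\<Sum>k. ennreal (exp (- real k)) * indicator (cube (sqrt ((real k + 1) / c))) w)"
    by (rule ennreal_le_suminf)
  finally show "ennreal (exp (- c * norm w ^ 2)) \<le> \<dots>" .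
qed auto

abbreviation lborel2 :: "('a::euclidean_space \<times> 'a) measure" where
  "lborel2 \<equiv> lborel \<Otimes>\<^sub>M lborel"

lemma nn_integral_lborel_translate:
  fixes c :: "'a::euclidean_space"
  assumes "g \<in> borel_measurable borel"
  shows "(\<integral>\<^sup>+y. g (c + y) \<partial>lborel) = (\<integral>\<^sup>+y. g y \<partial>lborel)"
  using nn_integral_distr[of "(+) c" lborel borel g] assms by (simp add: lborel_distr_plus)

lemma integrable_lborel_translate_iff:
  fixes c :: "'a::euclidean_space" and g :: "'a \<Rightarrow> real"
  assumes "g \<in> borel_measurable borel"
  shows "integrable lborel (\<lambda>y. g (c + y)) \<longleftrightarrow> integrable lborel g"
  using integrable_distr_eq[of "(+) c" lborel borel g] assms by (simp add: lborel_distr_plus)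

lemma integral_lborel_translate:
  fixes c :: "'a::euclidean_space" and g :: "'a \<Rightarrow> real"
  assumes "g \<in> borel_measurable borel"
  shows "(\<integral>y. g (c + y) \<partial>lborel) = (\<integral>y. g y \<partial>lborel)"
  using integral_distr[of "(+) c" lborel borel g] assms by (simp add: lborel_distr_plus)

lemma
  fixes a b :: "'a::euclidean_space \<Rightarrow> real"
  assumes a: "integrable lborel a" and b: "integrable lborel b"
  shows integrable_lborel2_tensor: "integrable lborel2 (\<lambda>p. a (fst p) * b (snd p))"
    and integral_lborel2_tensor:
      "(\<integral>p. a (fst p) * b (snd p) \<partial>lborel2) = (\<integral>x. a x \<partial>lborel) * (\<integral>y. b y \<partial>lborel)"
proof -
  have [measurable]: "a \<in> borel_measurable borel" "b \<in> borel_measurable borel"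
    using a b by auto
  show int: "integrable lborel2 (\<lambda>p. a (fst p) * b (snd p))"
  proof (rule integrableI_bounded)
    have "(\<integral>\<^sup>+p. ennreal (norm (a (fst p) * b (snd p))) \<partial>lborel2)
        = (\<integral>\<^sup>+x. \<integral>\<^sup>+y. ennreal (norm (a x)) * ennreal (norm (b y)) \<partial>lborel \<partial>lborel)"
      by (subst lborel.nn_integral_fst[symmetric]) (auto simp: abs_mult ennreal_mult)
    also have "\<dots> = (\<integral>\<^sup>+x. ennreal (norm (a x)) \<partial>lborel) * (\<integral>\<^sup>+y. ennreal (norm (b y)) \<partial>lborel)"
      by (simp add: nn_integral_cmult nn_integral_multc)
    also have "\<dots> < \<infinity>"
      using a b by (auto simp: integrable_iff_bounded ennreal_mult_less_top)
    finally show "(\<integral>\<^sup>+p. ennreal (norm (a (fst p) * b (snd p))) \<partial>lborel2) < \<infinity>" .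
  qed measurable
  show "(\<integral>p. a (fst p) * b (snd p) \<partial>lborel2) = (\<integral>x. a x \<partial>lborel) * (\<integral>y. b y \<partial>lborel)"
    using lborel_pair.integral_fst'[OF int] by simp
qed

lemma AE_lborel2_off_diagonal: "AE p in (lborel2 :: ('a::euclidean_space \<times> 'a) measure). fst p \<noteq> snd p"
proof (rule lborel_pair.AE_pair_measure)
  show "AE x in lborel. AE y in lborel. fst (x, y) \<noteq> snd (x::'a, y::'a)"
  proof (rule AE_I2)
    fix x :: 'a
    show "AE y in lborel. fst (x, y) \<noteq> snd (x, y)"
      using AE_lborel_singleton[of x] by (auto elim!: eventually_mono)
  qed
qed measurable

lemma integrable_ln_norm_neg_part_diff: "integrable lborel (\<lambda>y. ln_norm_neg_part (x - y :: pt))"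
proof -
  have "integrable lborel (\<lambda>y. ln_norm_neg_part (-x + y :: pt))"
    using integrable_ln_norm_neg_part by (subst integrable_lborel_translate_iff) auto
  then show ?thesis
    unfolding ln_norm_neg_part_def by (simp add: norm_minus_commute)
qed

lemma integrable_lborel2_mult_ln_norm_neg_part:
  fixes a :: "pt \<Rightarrow> real"
  assumes a: "integrable lborel a"
  shows "integrable lborel2 (\<lambda>p. a (fst p) * ln_norm_neg_part (fst p - snd p))"
proof (rule integrableI_bounded)
  have [measurable]: "a \<in> borel_measurable borel"
    using a by auto
  show "(\<lambda>p. a (fst p) * ln_norm_neg_part (fst p - snd p)) \<in> borel_measurable lborel2"
    by measurable
  have shift: "(\<integral>\<^sup>+y. ennreal (ln_norm_neg_part (x - y)) \<partial>lborel) = (\<integral>\<^sup>+y. ennreal (ln_norm_neg_part (y :: pt)) \<partial>lborel)"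
    for x :: pt
    using nn_integral_lborel_translate[of "\<lambda>y. ennreal (ln_norm_neg_part y)" "- x"]
    unfolding ln_norm_neg_part_def by (simp add: norm_minus_commute)
  have "(\<integral>\<^sup>+p. ennreal (norm (a (fst p) * ln_norm_neg_part (fst p - snd p))) \<partial>lborel2)
      = (\<integral>\<^sup>+x. \<integral>\<^sup>+y. ennreal (norm (a x)) * ennreal (ln_norm_neg_part (x - y)) \<partial>lborel \<partial>lborel)"
    by (subst lborel.nn_integral_fst[symmetric]) (auto simp: abs_mult ennreal_mult ln_norm_neg_part_nonneg)
  also have "\<dots> = (\<integral>\<^sup>+x. ennreal (norm (a x)) \<partial>lborel) * (\<integral>\<^sup>+y. ennreal (ln_norm_neg_part (y :: pt)) \<partial>lborel)"
    by (simp add: nn_integral_cmult nn_integral_multc shift)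
  also have "\<dots> < \<infinity>"
    using a integrable_ln_norm_neg_part
    by (auto simp: integrable_iff_bounded ennreal_mult_less_top ln_norm_neg_part_nonneg)
  finally show "(\<integral>\<^sup>+p. ennreal (norm (a (fst p) * ln_norm_neg_part (fst p - snd p))) \<partial>lborel2) < \<infinity>" .
qed

section \<open>The logarithmic interaction energy\<close>

definition log_admissible :: "(pt \<Rightarrow> real) \<Rightarrow> bool" where
  "log_admissible a \<longleftrightarrow> a \<in> borel_measurable borel \<and> (\<exists>B. \<forall>x. \<bar>a x\<bar> \<le> B)
     \<and> integrable lborel (\<lambda>x. a x * log_weight x)"

lemma log_admissible_measurable: "log_admissible a \<Longrightarrow> a \<in> borel_measurable borel"
  unfolding log_admissible_def by auto

lemma log_admissible_integrable:
  assumes "log_admissible a"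
  shows "integrable lborel a"
proof -
  have [measurable]: "a \<in> borel_measurable borel"
    using assms by (rule log_admissible_measurable)
  have "integrable lborel (\<lambda>x. a x * log_weight x / ln 2)"
    using assms unfolding log_admissible_def by auto
  then show ?thesis
  proof (rule Bochner_Integration.integrable_bound)
    show "AE x in lborel. norm (a x) \<le> norm (a x * log_weight x / ln 2)"
    proof (intro AE_I2)
      fix x
      have "\<bar>a x\<bar> * ln 2 \<le> \<bar>a x\<bar> * log_weight x"
        using log_weight_ge_ln2[of x] by (intro mult_left_mono) auto
      then show "norm (a x) \<le> norm (a x * log_weight x / ln 2)"
        using log_weight_nonneg[of x] by (simp add: abs_mult field_simps)
    qed
  qed simp
qed

lemma log_admissible_lincomb:
  assumes u: "log_admissible u" and v: "log_admissible v"
  shows "log_admissible (\<lambda>x. \<alpha> * u x + \<beta> * v x)"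
proof -
  obtain B1 B2 where B1: "\<And>x. \<bar>u x\<bar> \<le> B1" and B2: "\<And>x. \<bar>v x\<bar> \<le> B2"
    using u v unfolding log_admissible_def by auto
  have "\<bar>\<alpha> * u x + \<beta> * v x\<bar> \<le> \<bar>\<alpha>\<bar> * B1 + \<bar>\<beta>\<bar> * B2" for x
  proof -
    have "\<bar>\<alpha> * u x + \<beta> * v x\<bar> \<le> \<bar>\<alpha>\<bar> * \<bar>u x\<bar> + \<bar>\<beta>\<bar> * \<bar>v x\<bar>"
      by (simp add: abs_mult abs_triangle_ineq[THEN order_trans])
    also have "\<dots> \<le> \<bar>\<alpha>\<bar> * B1 + \<bar>\<beta>\<bar> * B2"
      using B1[of x] B2[of x] by (intro add_mono mult_left_mono) auto
    finally show ?thesis .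
  qed
  moreover have "integrable lborel (\<lambda>x. \<alpha> * (u x * log_weight x) + \<beta> * (v x * log_weight x))"
    using u v unfolding log_admissible_def by auto
  ultimately show ?thesis
    using u v unfolding log_admissible_def by (auto simp: algebra_simps)
qed

text \<open>The logarithm is split into its singular part at the diagonal, controlled by
  boundedness of b, and its growth at infinity, controlled by the logarithmic moments.\<close>

lemma abs_ln_norm_diff_mult_le:
  assumes "\<And>y. \<bar>b y\<bar> \<le> B"
  shows "\<bar>ln (norm (x - y)) * b y\<bar>
    \<le> B * ln_norm_neg_part (x - y) + log_weight x * \<bar>b y\<bar> + \<bar>b y * log_weight y\<bar>"
proof -
  have "\<bar>ln (norm (x - y)) * b y\<bar>
      \<le> (ln_norm_neg_part (x - y) + log_weight x + log_weight y) * \<bar>b y\<bar>"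
    unfolding abs_mult by (intro mult_right_mono abs_ln_norm_diff_le) auto
  also have "\<dots> \<le> B * ln_norm_neg_part (x - y) + log_weight x * \<bar>b y\<bar> + \<bar>b y * log_weight y\<bar>"
    using mult_right_mono[OF assms[of y] ln_norm_neg_part_nonneg[of "x - y"]] log_weight_nonneg[of y]
    by (simp add: algebra_simps abs_mult)
  finally show ?thesis .
qed

lemma integrable_ln_norm_diff_mult:
  assumes b: "log_admissible b"
  shows "integrable lborel (\<lambda>y. ln (norm (x - y)) * b y)"
proof -
  have [measurable]: "b \<in> borel_measurable borel"
    using b by (rule log_admissible_measurable)
  obtain B where B: "\<And>y. \<bar>b y\<bar> \<le> B"
    using b unfolding log_admissible_def by auto
  have "integrable lborel (\<lambda>y. B * ln_norm_neg_part (x - y) + log_weight x * \<bar>b y\<bar> + \<bar>b y * log_weight y\<bar>)"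
    using integrable_ln_norm_neg_part_diff log_admissible_integrable[OF b] b
    unfolding log_admissible_def by auto
  then show ?thesis
    by (rule Bochner_Integration.integrable_bound)
      (use abs_ln_norm_diff_mult_le[OF B] in \<open>auto intro!: AE_I2 order_trans[OF _ abs_ge_self]\<close>)
qed

lemma integrable_log_kernel:
  assumes a: "log_admissible a" and b: "log_admissible b"
  shows "integrable lborel2 (\<lambda>p. a (fst p) * ln (norm (fst p - snd p)) * b (snd p))"
proof -
  have [measurable]: "a \<in> borel_measurable borel" "b \<in> borel_measurable borel"
    using a b by (auto intro: log_admissible_measurable)
  obtain B where B: "\<And>y. \<bar>b y\<bar> \<le> B"
    using b unfolding log_admissible_def by auto
  have ai: "integrable lborel a" and bi: "integrable lborel b"
    using a b by (auto intro: log_admissible_integrable)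
  have "integrable lborel2 (\<lambda>p. (B * \<bar>a (fst p)\<bar>) * ln_norm_neg_part (fst p - snd p)
      + \<bar>a (fst p) * log_weight (fst p)\<bar> * \<bar>b (snd p)\<bar> + \<bar>a (fst p)\<bar> * \<bar>b (snd p) * log_weight (snd p)\<bar>)"
    using a b ai bi unfolding log_admissible_def
    by (intro Bochner_Integration.integrable_add integrable_lborel2_mult_ln_norm_neg_part
        integrable_lborel2_tensor) auto
  then show ?thesis
  proof (rule Bochner_Integration.integrable_bound)
    show "AE p in lborel2. norm (a (fst p) * ln (norm (fst p - snd p)) * b (snd p))
      \<le> norm ((B * \<bar>a (fst p)\<bar>) * ln_norm_neg_part (fst p - snd p)
      + \<bar>a (fst p) * log_weight (fst p)\<bar> * \<bar>b (snd p)\<bar> + \<bar>a (fst p)\<bar> * \<bar>b (snd p) * log_weight (snd p)\<bar>)"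
    proof (intro AE_I2, clarify)
      fix x y :: pt
      have "norm (a x * ln (norm (x - y)) * b y) = \<bar>a x\<bar> * \<bar>ln (norm (x - y)) * b y\<bar>"
        by (simp add: abs_mult)
      also have "\<dots> \<le> \<bar>a x\<bar> * (B * ln_norm_neg_part (x - y) + log_weight x * \<bar>b y\<bar> + \<bar>b y * log_weight y\<bar>)"
        by (intro mult_left_mono abs_ln_norm_diff_mult_le B) simp
      also have "\<dots> = (B * \<bar>a x\<bar>) * ln_norm_neg_part (x - y) + \<bar>a x * log_weight x\<bar> * \<bar>b y\<bar> + \<bar>a x\<bar> * \<bar>b y * log_weight y\<bar>"
        using log_weight_nonneg[of x] by (simp add: algebra_simps abs_mult)
      finally have bound: "norm (a x * ln (norm (x - y)) * b y)
        \<le> (B * \<bar>a x\<bar>) * ln_norm_neg_part (x - y) + \<bar>a x * log_weight x\<bar> * \<bar>b y\<bar> + \<bar>a x\<bar> * \<bar>b y * log_weight y\<bar>" .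
      show "norm (a (fst (x, y)) * ln (norm (fst (x, y) - snd (x, y))) * b (snd (x, y)))
        \<le> norm ((B * \<bar>a (fst (x, y))\<bar>) * ln_norm_neg_part (fst (x, y) - snd (x, y))
        + \<bar>a (fst (x, y)) * log_weight (fst (x, y))\<bar> * \<bar>b (snd (x, y))\<bar>
        + \<bar>a (fst (x, y))\<bar> * \<bar>b (snd (x, y)) * log_weight (snd (x, y))\<bar>)"
        using order_trans[OF bound abs_ge_self] by simp
    qed
  qed measurable
qed

definition log_energy :: "(pt \<Rightarrow> real) \<Rightarrow> (pt \<Rightarrow> real) \<Rightarrow> real" where
  "log_energy a b = (\<integral>p. a (fst p) * ln (norm (fst p - snd p)) * b (snd p) \<partial>lborel2)"

lemma log_energy_iterated:
  assumes "log_admissible a" "log_admissible b"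
  shows "log_energy a b = (\<integral>x. a x * (\<integral>y. ln (norm (x - y)) * b y \<partial>lborel) \<partial>lborel)"
  unfolding log_energy_def using lborel_pair.integral_fst'[OF integrable_log_kernel[OF assms]]
  by (simp add: mult.assoc)

lemma log_energy_lincomb_left:
  assumes "log_admissible u" "log_admissible v" "log_admissible w"
  shows "log_energy (\<lambda>x. \<alpha> * u x + \<beta> * v x) w = \<alpha> * log_energy u w + \<beta> * log_energy v w"
proof -
  have "log_energy (\<lambda>x. \<alpha> * u x + \<beta> * v x) w
      = (\<integral>p. \<alpha> * (u (fst p) * ln (norm (fst p - snd p)) * w (snd p))
         + \<beta> * (v (fst p) * ln (norm (fst p - snd p)) * w (snd p)) \<partial>lborel2)"
    unfolding log_energy_def by (simp add: algebra_simps)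
  also have "\<dots> = \<alpha> * log_energy u w + \<beta> * log_energy v w"
    unfolding log_energy_def using integrable_log_kernel assms by simp
  finally show ?thesis .
qed

lemma log_energy_lincomb_right:
  assumes "log_admissible u" "log_admissible v" "log_admissible w"
  shows "log_energy w (\<lambda>x. \<alpha> * u x + \<beta> * v x) = \<alpha> * log_energy w u + \<beta> * log_energy w v"
proof -
  have "log_energy w (\<lambda>x. \<alpha> * u x + \<beta> * v x)
      = (\<integral>p. \<alpha> * (w (fst p) * ln (norm (fst p - snd p)) * u (snd p))
         + \<beta> * (w (fst p) * ln (norm (fst p - snd p)) * v (snd p)) \<partial>lborel2)"
    unfolding log_energy_def by (simp add: algebra_simps)
  also have "\<dots> = \<alpha> * log_energy w u + \<beta> * log_energy w v"
    unfolding log_energy_def using integrable_log_kernel assms by simp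
  finally show ?thesis .
qed

lemma log_energy_convex_combination:
  assumes u: "log_admissible u" and v: "log_admissible v"
  shows "log_energy (\<lambda>x. t * u x + (1 - t) * v x) (\<lambda>x. t * u x + (1 - t) * v x)
    = t * log_energy u u + (1 - t) * log_energy v v
      - t * (1 - t) * log_energy (\<lambda>x. u x - v x) (\<lambda>x. u x - v x)"
proof -
  have diff: "(\<lambda>x. u x - v x) = (\<lambda>x. 1 * u x + (-1) * v x)"
    by simp
  have s: "log_admissible (\<lambda>x. t * u x + (1 - t) * v x)"
    by (rule log_admissible_lincomb[OF u v])
  have d: "log_admissible (\<lambda>x. 1 * u x + (-1) * v x)"
    by (rule log_admissible_lincomb[OF u v])
  show ?thesis
    unfolding diff log_energy_lincomb_left[OF u v s] log_energy_lincomb_left[OF u v d]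
      log_energy_lincomb_right[OF u v u] log_energy_lincomb_right[OF u v v]
    by (simp add: algebra_simps)
qed

section \<open>Frullani's integral for the logarithm\<close>

lemma tendsto_exp_neg_linear_at_top:
  assumes c: "0 < (c::real)"
  shows "((\<lambda>t. exp (- (t * c))) \<longlongrightarrow> 0) at_top"
proof -
  have "filterlim (\<lambda>t. t * c) at_top at_top"
    using c by (intro filterlim_at_top_mult_tendsto_pos[OF tendsto_const]) (auto intro: filterlim_ident)
  then have "filterlim (\<lambda>t. - (t * c)) at_bot at_top"
    by (simp add: filterlim_uminus_at_top)
  then show ?thesis
    by (rule filterlim_compose[OF exp_at_bot])
qed

lemma nn_integral_exp_neg_Ioi:
  assumes u: "0 < u"
  shows "(\<integral>\<^sup>+t. ennreal (exp (- (t * u))) * indicator {0<..} t \<partial>lborel) = ennreal (1 / u)"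
proof -
  have "(\<integral>\<^sup>+t. ennreal (exp (- (t * u))) * indicator {0<..} t \<partial>lborel)
      = (\<integral>\<^sup>+t. ennreal (exp (- (t * u))) * indicator {0..} t \<partial>lborel)"
    by (intro nn_integral_cong_AE)
      (use AE_lborel_singleton[of 0] in \<open>auto elim!: eventually_mono simp: indicator_def\<close>)
  also have "\<dots> = ennreal (0 - (- exp (- (0 * u)) / u))"
  proof (rule nn_integral_FTC_atLeast)
    show "DERIV (\<lambda>t. - exp (- (t * u)) / u) x :> exp (- (x * u))" for x
      using u by (auto intro!: derivative_eq_intros)
    show "((\<lambda>t. - exp (- (t * u)) / u) \<longlongrightarrow> 0) at_top"
      using tendsto_minus[OF tendsto_divide_zero[OF tendsto_exp_neg_linear_at_top[OF u]]] by simp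
  qed auto
  finally show ?thesis by simp
qed

lemma nn_integral_exp_neg_Icc:
  assumes t: "0 < t" and pq: "p \<le> q"
  shows "(\<integral>\<^sup>+u. ennreal (exp (- (t * u))) * indicator {p..q} u \<partial>lborel)
    = ennreal ((exp (- (t * p)) - exp (- (t * q))) / t)"
proof -
  have "(\<integral>\<^sup>+u. ennreal (exp (- (t * u))) * indicator {p..q} u \<partial>lborel)
      = ennreal ((- exp (- (t * q)) / t) - (- exp (- (t * p)) / t))"
  proof (rule nn_integral_FTC_Icc)
    show "DERIV (\<lambda>u. - exp (- (t * u)) / t) x :> exp (- (t * x))" for x
      using t by (auto intro!: derivative_eq_intros)
  qed (use pq in auto)
  then show ?thesis
    by (simp add: diff_divide_distrib)
qed

text \<open>Tonelli applied to the double integral of exp (- t u) over 0 < t, p \<le> u \<le> q.\<close>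

lemma nn_integral_frullani:
  assumes p: "0 < p" and pq: "p \<le> q"
  shows "(\<integral>\<^sup>+t. ennreal (indicator {0<..} t * ((exp (- (t * p)) - exp (- (t * q))) / t)) \<partial>lborel)
    = ennreal (ln q - ln p)"
proof -
  have "ennreal (indicator {0<..} t * ((exp (- (t * p)) - exp (- (t * q))) / t))
      = (\<integral>\<^sup>+u. ennreal (indicator {0<..} t * exp (- (t * u)) * indicator {p..q} u) \<partial>lborel)" for t
  proof (cases "0 < t")
    case True
    have "(\<integral>\<^sup>+u. ennreal (indicator {0<..} t * exp (- (t * u)) * indicator {p..q} u) \<partial>lborel)
        = (\<integral>\<^sup>+u. ennreal (exp (- (t * u))) * indicator {p..q} u \<partial>lborel)"
      using True by (intro nn_integral_cong) (simp split: split_indicator)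
    with True show ?thesis
      by (simp add: nn_integral_exp_neg_Icc[OF True pq])
  qed simp
  then have "(\<integral>\<^sup>+t. ennreal (indicator {0<..} t * ((exp (- (t * p)) - exp (- (t * q))) / t)) \<partial>lborel)
      = (\<integral>\<^sup>+t. \<integral>\<^sup>+u. ennreal (indicator {0<..} t * exp (- (t * u)) * indicator {p..q} u) \<partial>lborel \<partial>lborel)"
    by simp
  also have "\<dots> = (\<integral>\<^sup>+u. \<integral>\<^sup>+t. ennreal (indicator {0<..} t * exp (- (t * u)) * indicator {p..q} u) \<partial>lborel \<partial>lborel)"
    by (rule lborel_pair.Fubini'[symmetric]) measurable
  also have "\<dots> = (\<integral>\<^sup>+u. ennreal (1 / u) * indicator {p..q} u \<partial>lborel)"
  proof (rule nn_integral_cong)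
    fix u :: real
    show "(\<integral>\<^sup>+t. ennreal (indicator {0<..} t * exp (- (t * u)) * indicator {p..q} u) \<partial>lborel)
      = ennreal (1 / u) * indicator {p..q} u"
    proof (cases "u \<in> {p..q}")
      case True
      then have "(\<integral>\<^sup>+t. ennreal (indicator {0<..} t * exp (- (t * u)) * indicator {p..q} u) \<partial>lborel)
          = (\<integral>\<^sup>+t. ennreal (exp (- (t * u))) * indicator {0<..} t \<partial>lborel)"
        by (intro nn_integral_cong) (simp add: indicator_def)
      with True p show ?thesis
        by (simp add: nn_integral_exp_neg_Ioi)
    qed simp
  qed
  also have "\<dots> = ennreal (ln q - ln p)"
  proof (rule nn_integral_FTC_Icc)
    show "DERIV ln x :> 1 / x" if "x \<in> {p..q}" for x
      using that p by (intro DERIV_ln_divide) auto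
  qed (use pq p in auto)
  finally show ?thesis .
qed

definition frullani_kernel :: "real \<Rightarrow> real \<Rightarrow> real" where
  "frullani_kernel a t = indicator {0<..} t * ((exp (- (t * a)) - exp (- t)) / t)"

lemma borel_measurable_frullani_kernel[measurable]: "frullani_kernel a \<in> borel_measurable borel"
  unfolding frullani_kernel_def by measurable

lemma
  assumes a: "0 < a"
  shows integral_frullani_kernel: "(\<integral>t. frullani_kernel a t \<partial>lborel) = - ln a"
    and nn_integral_abs_frullani_kernel:
      "(\<integral>\<^sup>+t. ennreal \<bar>frullani_kernel a t\<bar> \<partial>lborel) = ennreal \<bar>ln a\<bar>"
proof -
  obtain \<sigma> :: real and f where \<sigma>: "\<sigma> = 1 \<or> \<sigma> = -1" and f_def: "f = (\<lambda>t. \<sigma> * frullani_kernel a t)"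
    and f_nonneg: "\<And>t. 0 \<le> f t" and sign: "0 \<le> - \<sigma> * ln a" and f_nn: "(\<integral>\<^sup>+t. ennreal (f t) \<partial>lborel) = ennreal (- \<sigma> * ln a)"
  proof (cases "a \<le> 1")
    case True
    show ?thesis
    proof (rule that[of 1])
      show "0 \<le> 1 * frullani_kernel a t" for t
        using True unfolding frullani_kernel_def
        by (auto simp: indicator_def intro!: divide_nonneg_pos mult_le_cancel_left1)
      show "(\<integral>\<^sup>+t. ennreal (1 * frullani_kernel a t) \<partial>lborel) = ennreal (- 1 * ln a)"
        using nn_integral_frullani[OF a True] by (simp add: frullani_kernel_def)
    qed (use a True in auto)
  next
    case False
    show ?thesis
    proof (rule that[of "-1"])
      show "0 \<le> -1 * frullani_kernel a t" for t
        using False unfolding frullani_kernel_def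
        by (auto simp: indicator_def intro!: divide_nonpos_pos)
      have "-1 * frullani_kernel a t = indicator {0<..} t * ((exp (- (t * 1)) - exp (- (t * a))) / t)" for t
        unfolding frullani_kernel_def by (simp add: field_simps)
      then show "(\<integral>\<^sup>+t. ennreal (-1 * frullani_kernel a t) \<partial>lborel) = ennreal (- (-1) * ln a)"
        using nn_integral_frullani[of 1 a] False by simp
    qed (use False in auto)
  qed
  have abs_eq: "\<bar>frullani_kernel a t\<bar> = f t" for t
    using f_nonneg[of t] \<sigma> unfolding f_def by auto
  have "- \<sigma> * ln a = \<bar>ln a\<bar>"
    using sign \<sigma> by auto
  then show "(\<integral>\<^sup>+t. ennreal \<bar>frullani_kernel a t\<bar> \<partial>lborel) = ennreal \<bar>ln a\<bar>"
    by (simp add: abs_eq f_nn)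
  have "(\<integral>t. f t \<partial>lborel) = - \<sigma> * ln a"
    using f_nn f_nonneg sign
    by (subst integral_eq_nn_integral) (auto simp: f_def)
  then show "(\<integral>t. frullani_kernel a t \<partial>lborel) = - ln a"
    using \<sigma> unfolding f_def by auto
qed

definition gauss_mass :: "real \<Rightarrow> real" where
  "gauss_mass c = (\<integral>w. exp (- c * norm (w::pt) ^ 2) \<partial>lborel)"

lemma integrable_gaussian_centered:
  fixes x :: pt
  assumes c: "0 < c"
  shows "integrable lborel (\<lambda>z::pt. exp (- c * norm (x - z) ^ 2))"
proof -
  have "integrable lborel (\<lambda>z::pt. exp (- c * norm (- x + z) ^ 2))"
    using integrable_gaussian[OF c] by (subst integrable_lborel_translate_iff) auto
  then show ?thesis
    by (simp add: norm_minus_commute)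
qed

lemma integral_gaussian_centered: "(\<integral>z. exp (- c * norm ((x::pt) - z) ^ 2) \<partial>lborel) = gauss_mass c"
  using integral_lborel_translate[of "\<lambda>w::pt. exp (- c * norm w ^ 2)" "- x"]
  unfolding gauss_mass_def by (simp add: norm_minus_commute)

lemma nn_integral_gaussian_centered:
  "0 < c \<Longrightarrow> (\<integral>\<^sup>+z. ennreal (exp (- c * norm ((x::pt) - z) ^ 2)) \<partial>lborel) = ennreal (gauss_mass c)"
  using nn_integral_eq_integral[OF integrable_gaussian_centered] integral_gaussian_centered by simp

lemma gauss_mass_pos:
  assumes c: "0 < c"
  shows "0 < gauss_mass c"
proof -
  have "0 \<le> gauss_mass c"
    unfolding gauss_mass_def by (rule integral_nonneg_AE) auto
  moreover have "gauss_mass c \<noteq> 0"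
  proof
    assume "gauss_mass c = 0"
    then have "AE w in lborel. exp (- c * norm (w::pt) ^ 2) = 0"
      unfolding gauss_mass_def using integral_nonneg_eq_0_iff_AE[OF integrable_gaussian[OF c]] by auto
    then have "ae_filter (lborel::pt measure) = bot"
      by (simp add: trivial_limit_def)
    then show False
      by (simp add: ae_filter_eq_bot_iff)
  qed
  ultimately show ?thesis by simp
qed

lemma gauss_mass_lower_bound:
  assumes s: "0 < s" and r: "0 < r"
  shows "exp (- (4 * s * r^2)) * (2 * r)^2 \<le> gauss_mass s"
proof -
  have "exp (- (4 * s * r^2)) * (2 * r)^2 = (\<integral>w. indicator (cube r) w * exp (- (4 * s * r^2)) \<partial>lborel)"
    using emeasure_cube[of r] r by (simp add: measure_def)
  also have "\<dots> \<le> (\<integral>w. exp (- s * norm (w::pt) ^ 2) \<partial>lborel)"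
  proof (rule integral_mono)
    show "integrable lborel (\<lambda>w. indicator (cube r) w * exp (- (4 * s * r^2)))"
      using emeasure_cube[of r] r by (intro integrable_mult_left integrable_real_indicator) auto
    fix w :: pt
    have "s * norm w ^ 2 \<le> 4 * s * r^2" if "w \<in> cube r"
    proof -
      have "norm w ^ 2 \<le> (2 * r)^2"
        using norm_le_if_mem_cube[OF that] by (intro power_mono) auto
      then show ?thesis
        using s by (simp add: power_mult_distrib mult_left_mono)
    qed
    then show "indicator (cube r) w * exp (- (4 * s * r^2)) \<le> exp (- s * norm w ^ 2)"
      by (simp split: split_indicator)
  qed (rule integrable_gaussian[OF s])
  finally show ?thesis
    unfolding gauss_mass_def .
qed

lemma sum_sq_dist_eq:
  fixes x y z :: "'a::real_inner"
  shows "2 * t * norm (x - z)^2 + 2 * t * norm (y - z)^2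
    = t * norm (x - y)^2 + 4 * t * norm (z - (1/2) *\<^sub>R (x + y))^2"
  by (simp add: power2_norm_eq_inner inner_diff_left inner_diff_right inner_add_left
      inner_add_right algebra_simps inner_commute)

lemma integral_gaussian_product:
  fixes x y :: pt
  shows "(\<integral>z. exp (- (2 * t) * norm (x - z)^2) * exp (- (2 * t) * norm (y - z)^2) \<partial>lborel)
    = gauss_mass (4 * t) * exp (- t * norm (x - y)^2)"
proof -
  have "exp (- (2 * t) * norm (x - z)^2) * exp (- (2 * t) * norm (y - z)^2)
      = exp (- t * norm (x - y)^2) * exp (- (4 * t) * norm ((1/2) *\<^sub>R (x + y) - z)^2)" for z
    using sum_sq_dist_eq[of t x z y] by (simp add: exp_add[symmetric] norm_minus_commute)
  then show ?thesis
    using integral_gaussian_centered[of "4 * t" "(1/2) *\<^sub>R (x + y)"] by simp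
qed

lemma nn_integral_gaussian_product:
  fixes x y :: pt
  assumes t: "0 < t"
  shows "(\<integral>\<^sup>+z. ennreal (exp (- (2 * t) * norm (x - z)^2) * exp (- (2 * t) * norm (y - z)^2)) \<partial>lborel)
    = ennreal (gauss_mass (4 * t) * exp (- t * norm (x - y)^2))"
proof -
  have "integrable lborel (\<lambda>z. exp (- (2 * t) * norm (y - z)^2))"
    by (rule integrable_gaussian_centered) (use t in simp)
  then have "integrable lborel (\<lambda>z. exp (- (2 * t) * norm (x - z)^2) * exp (- (2 * t) * norm (y - z)^2))"
  proof (rule Bochner_Integration.integrable_bound)
    show "AE z in lborel. norm (exp (- (2 * t) * norm (x - z)^2) * exp (- (2 * t) * norm (y - z)^2))
        \<le> norm (exp (- (2 * t) * norm (y - z)^2))"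
      using t by (intro AE_I2) (simp add: mult_left_le_one_le)
  qed measurable
  then show ?thesis
    using integral_gaussian_product[of t x y] by (simp add: nn_integral_eq_integral)
qed

section \<open>Gaussian representation of the logarithmic energy\<close>

interpretation lborel2_lborel: pair_sigma_finite "lborel2 :: (pt \<times> pt) measure" "lborel :: pt measure"
  by (intro pair_sigma_finite.intro sigma_finite_pair_measure lborel.sigma_finite_measure_axioms)

interpretation lborel2_lborel_real: pair_sigma_finite "lborel2 :: (pt \<times> pt) measure" "lborel :: real measure"
  by (intro pair_sigma_finite.intro sigma_finite_pair_measure lborel.sigma_finite_measure_axioms)

definition gauss_transform :: "(pt \<Rightarrow> real) \<Rightarrow> real \<Rightarrow> pt \<Rightarrow> real" where
  "gauss_transform f s z = (\<integral>x. f x * exp (- s * norm (x - z)^2) \<partial>lborel)"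

definition gauss_energy :: "(pt \<Rightarrow> real) \<Rightarrow> real \<Rightarrow> real" where
  "gauss_energy f t = (\<integral>p. f (fst p) * f (snd p) * exp (- t * norm (fst p - snd p)^2) \<partial>lborel2)"

lemma integrable_mult_gaussian:
  fixes f :: "pt \<Rightarrow> real"
  assumes f: "integrable lborel f" and s: "0 \<le> s"
  shows "integrable lborel (\<lambda>x. f x * exp (- s * norm (x - z)^2))"
  using f
proof (rule Bochner_Integration.integrable_bound)
  have [measurable]: "f \<in> borel_measurable borel"
    using f by auto
  show "(\<lambda>x. f x * exp (- s * norm (x - z)^2)) \<in> borel_measurable lborel"
    by measurable
  show "AE x in lborel. norm (f x * exp (- s * norm (x - z)^2)) \<le> norm (f x)"
    using s by (intro AE_I2) (simp add: abs_mult mult_left_le)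
qed

lemma integrable_gauss_energy_kernel:
  fixes f :: "pt \<Rightarrow> real"
  assumes f: "integrable lborel f" and t: "0 < t"
  shows "integrable (lborel2 \<Otimes>\<^sub>M lborel) (\<lambda>(p, z).
    (f (fst p) * exp (- (2 * t) * norm (fst p - z)^2)) * (f (snd p) * exp (- (2 * t) * norm (snd p - z)^2)))"
    (is "integrable _ (\<lambda>(p, z). ?H p z)")
proof (rule integrableI_bounded)
  have [measurable]: "f \<in> borel_measurable borel"
    using f by auto
  show H[measurable]: "(\<lambda>(p, z). ?H p z) \<in> borel_measurable (lborel2 \<Otimes>\<^sub>M lborel)"
    unfolding case_prod_beta by measurable
  have G: "0 < gauss_mass (4 * t)"
    using t by (simp add: gauss_mass_pos)
  have inner: "(\<integral>\<^sup>+z. ennreal (norm (?H p z)) \<partial>lborel)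
      = ennreal (\<bar>f (fst p)\<bar> * \<bar>f (snd p)\<bar> * (gauss_mass (4 * t) * exp (- t * norm (fst p - snd p)^2)))" for p
  proof -
    have "(\<integral>\<^sup>+z. ennreal (norm (?H p z)) \<partial>lborel)
        = ennreal (\<bar>f (fst p)\<bar> * \<bar>f (snd p)\<bar>)
          * (\<integral>\<^sup>+z. ennreal (exp (- (2 * t) * norm (fst p - z)^2) * exp (- (2 * t) * norm (snd p - z)^2)) \<partial>lborel)"
      by (subst nn_integral_cmult[symmetric]) (auto simp: abs_mult ennreal_mult[symmetric] mult_ac)
    also have "\<dots> = ennreal (\<bar>f (fst p)\<bar> * \<bar>f (snd p)\<bar>) * ennreal (gauss_mass (4 * t) * exp (- t * norm (fst p - snd p)^2))"
      by (simp only: nn_integral_gaussian_product[OF t])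
    finally show ?thesis
      using G by (simp add: ennreal_mult)
  qed
  have "(\<integral>\<^sup>+q. ennreal (norm (case q of (p, z) \<Rightarrow> ?H p z)) \<partial>(lborel2 \<Otimes>\<^sub>M lborel))
      = (\<integral>\<^sup>+p. \<integral>\<^sup>+z. ennreal (norm (?H p z)) \<partial>lborel \<partial>lborel2)"
    using lborel.nn_integral_fst[of "\<lambda>q. ennreal (norm (case q of (p, z) \<Rightarrow> ?H p z))" lborel2] by simp
  also have "\<dots> \<le> (\<integral>\<^sup>+p. ennreal ((gauss_mass (4 * t) * \<bar>f (fst p)\<bar>) * \<bar>f (snd p)\<bar>) \<partial>lborel2)"
  proof (unfold inner, intro nn_integral_mono ennreal_leI)
    fix p :: "pt \<times> pt"
    have "gauss_mass (4 * t) * exp (- t * norm (fst p - snd p)^2) \<le> gauss_mass (4 * t)"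
      using G t by (simp add: mult_left_le)
    then have "\<bar>f (fst p)\<bar> * \<bar>f (snd p)\<bar> * (gauss_mass (4 * t) * exp (- t * norm (fst p - snd p)^2))
        \<le> \<bar>f (fst p)\<bar> * \<bar>f (snd p)\<bar> * gauss_mass (4 * t)"
      by (rule mult_left_mono) simp
    then show "\<bar>f (fst p)\<bar> * \<bar>f (snd p)\<bar> * (gauss_mass (4 * t) * exp (- t * norm (fst p - snd p)^2))
        \<le> (gauss_mass (4 * t) * \<bar>f (fst p)\<bar>) * \<bar>f (snd p)\<bar>"
      by (simp add: mult_ac)
  qed
  also have "\<dots> < \<infinity>"
    using integrableD(2)[OF integrable_lborel2_tensor[of "\<lambda>x. gauss_mass (4 * t) * \<bar>f x\<bar>" "\<lambda>y. \<bar>f y\<bar>"]] f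
    by (simp add: less_top)
  finally show "(\<integral>\<^sup>+q. ennreal (norm (case q of (p, z) \<Rightarrow> ?H p z)) \<partial>(lborel2 \<Otimes>\<^sub>M lborel)) < \<infinity>" .
qed

lemma
  fixes f :: "pt \<Rightarrow> real"
  assumes f: "integrable lborel f" and t: "0 < t"
  shows integrable_gauss_transform_sq: "integrable lborel (\<lambda>z. (gauss_transform f (2 * t) z)^2)"
    and gauss_energy_eq:
      "gauss_energy f t = (\<integral>z. (gauss_transform f (2 * t) z)^2 \<partial>lborel) / gauss_mass (4 * t)"
proof -
  let ?H = "\<lambda>p z. (f (fst p) * exp (- (2 * t) * norm (fst p - z)^2)) * (f (snd p) * exp (- (2 * t) * norm (snd p - z)^2))"
  have H: "integrable (lborel2 \<Otimes>\<^sub>M lborel) (\<lambda>(p, z). ?H p z)"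
    by (rule integrable_gauss_energy_kernel[OF f t])
  have dp: "(\<integral>p. ?H p z \<partial>lborel2) = (gauss_transform f (2 * t) z)^2" for z
    using integral_lborel2_tensor[OF integrable_mult_gaussian[OF f, of "2 * t" z] integrable_mult_gaussian[OF f, of "2 * t" z]] t
    by (simp add: gauss_transform_def power2_eq_square)
  have dz: "(\<integral>z. ?H p z \<partial>lborel) = gauss_mass (4 * t) * (f (fst p) * f (snd p) * exp (- t * norm (fst p - snd p)^2))" for p
    using integral_gaussian_product[of t "fst p" "snd p"] by (simp add: mult_ac)
  show "integrable lborel (\<lambda>z. (gauss_transform f (2 * t) z)^2)"
    using lborel2_lborel.integrable_snd[OF H] dp by simp
  have "(\<integral>z. (gauss_transform f (2 * t) z)^2 \<partial>lborel) = (\<integral>p. \<integral>z. ?H p z \<partial>lborel \<partial>lborel2)"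
    using lborel2_lborel.Fubini_integral[OF H] dp by simp
  also have "\<dots> = gauss_mass (4 * t) * gauss_energy f t"
    using dz by (simp add: gauss_energy_def)
  finally show "gauss_energy f t = (\<integral>z. (gauss_transform f (2 * t) z)^2 \<partial>lborel) / gauss_mass (4 * t)"
    using gauss_mass_pos[of "4 * t"] t by simp
qed

lemma gauss_energy_nonneg:
  assumes "integrable lborel f" "0 < t"
  shows "0 \<le> gauss_energy f t"
  using gauss_energy_eq[OF assms] gauss_mass_pos[of "4 * t"] assms(2)
    integral_nonneg_AE[of "\<lambda>z. (gauss_transform f (2 * t) z)^2" lborel]
  by simp

lemma AE_imp_bex_if_emeasure_nonzero:
  assumes "AE x in M. P x" and A: "A \<in> sets M" "emeasure M A \<noteq> 0"
  shows "\<exists>x\<in>A. P x"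
proof (rule ccontr)
  assume "\<not> (\<exists>x\<in>A. P x)"
  then have "AE x in M. x \<notin> A"
    using assms(1) by (auto elim: eventually_mono)
  then have "emeasure M A = 0"
    using A sets.sets_into_space[OF A(1)] by (subst (asm) AE_iff_measurable[of A]) auto
  with A show False by simp
qed

text \<open>Fubini for this weight links log_energy to gauss_energy; the constant part exp (- t)
  of the Frullani kernel contributes exp (- t) (\<integral> f)^2 = 0.\<close>

definition frullani_weight :: "(pt \<Rightarrow> real) \<Rightarrow> pt \<times> pt \<Rightarrow> real \<Rightarrow> real" where
  "frullani_weight f p t = f (fst p) * f (snd p) * frullani_kernel (norm (fst p - snd p)^2) t"

lemma integral_frullani_weight_dt:
  assumes "fst p \<noteq> snd p"
  shows "(\<integral>t. frullani_weight f p t \<partial>lborel) = - 2 * (f (fst p) * ln (norm (fst p - snd p)) * f (snd p))"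
  using assms integral_frullani_kernel[of "norm (fst p - snd p)^2"]
  by (simp add: frullani_weight_def ln_realpow)

lemma nn_integral_abs_frullani_weight_dt:
  assumes "fst p \<noteq> snd p"
  shows "(\<integral>\<^sup>+t. ennreal \<bar>frullani_weight f p t\<bar> \<partial>lborel)
    = 2 * ennreal \<bar>f (fst p) * ln (norm (fst p - snd p)) * f (snd p)\<bar>"
proof -
  have "(\<integral>\<^sup>+t. ennreal \<bar>frullani_weight f p t\<bar> \<partial>lborel)
      = ennreal \<bar>f (fst p) * f (snd p)\<bar> * (\<integral>\<^sup>+t. ennreal \<bar>frullani_kernel (norm (fst p - snd p)^2) t\<bar> \<partial>lborel)"
    unfolding frullani_weight_def by (subst nn_integral_cmult[symmetric]) (auto simp: abs_mult ennreal_mult)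
  also have "\<dots> = 2 * ennreal \<bar>f (fst p) * ln (norm (fst p - snd p)) * f (snd p)\<bar>"
    using assms by (simp add: nn_integral_abs_frullani_kernel ln_realpow ennreal_mult abs_mult mult_ac)
  finally show ?thesis .
qed

lemma integrable_frullani_weight:
  assumes f: "log_admissible f"
  shows "integrable (lborel2 \<Otimes>\<^sub>M lborel) (\<lambda>(p, t). frullani_weight f p t)"
proof (rule integrableI_bounded)
  have [measurable]: "f \<in> borel_measurable borel"
    using f by (rule log_admissible_measurable)
  show W[measurable]: "(\<lambda>(p, t). frullani_weight f p t) \<in> borel_measurable (lborel2 \<Otimes>\<^sub>M lborel)"
    unfolding case_prod_beta frullani_weight_def frullani_kernel_def by measurable
  have "(\<integral>\<^sup>+q. ennreal (norm (case q of (p, t) \<Rightarrow> frullani_weight f p t)) \<partial>(lborel2 \<Otimes>\<^sub>M lborel))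
      = (\<integral>\<^sup>+p. \<integral>\<^sup>+t. ennreal (norm (frullani_weight f p t)) \<partial>lborel \<partial>lborel2)"
    using lborel.nn_integral_fst[of "\<lambda>q. ennreal (norm (case q of (p, t) \<Rightarrow> frullani_weight f p t))" lborel2]
    by simp
  also have "\<dots> = (\<integral>\<^sup>+p. 2 * ennreal \<bar>f (fst p) * ln (norm (fst p - snd p)) * f (snd p)\<bar> \<partial>lborel2)"
    using AE_lborel2_off_diagonal
    by (intro nn_integral_cong_AE) (auto elim!: eventually_mono simp: nn_integral_abs_frullani_weight_dt)
  also have "\<dots> = 2 * (\<integral>\<^sup>+p. ennreal \<bar>f (fst p) * ln (norm (fst p - snd p)) * f (snd p)\<bar> \<partial>lborel2)"
    by (rule nn_integral_cmult) measurable
  also have "\<dots> < \<infinity>"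
    using integrable_log_kernel[OF f f] by (simp add: integrable_iff_bounded ennreal_mult_less_top)
  finally show "(\<integral>\<^sup>+q. ennreal (norm (case q of (p, t) \<Rightarrow> frullani_weight f p t)) \<partial>(lborel2 \<Otimes>\<^sub>M lborel)) < \<infinity>" .
qed

lemma integral_frullani_weight_dp:
  fixes f :: "pt \<Rightarrow> real"
  assumes f: "integrable lborel f" and f0: "(\<integral>x. f x \<partial>lborel) = 0"
  shows "(\<integral>p. frullani_weight f p t \<partial>lborel2) = indicator {0<..} t * (gauss_energy f t / t)"
proof (cases "0 < t")
  case True
  have [measurable]: "f \<in> borel_measurable borel"
    using f by auto
  have ff: "integrable lborel2 (\<lambda>p. f (fst p) * f (snd p))"
    by (rule integrable_lborel2_tensor[OF f f])
  have ffg: "integrable lborel2 (\<lambda>p. f (fst p) * f (snd p) * exp (- t * norm (fst p - snd p)^2))"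
    using ff by (rule Bochner_Integration.integrable_bound) (use True in \<open>auto intro!: AE_I2 simp: abs_mult mult_left_le\<close>)
  have "frullani_weight f p t
      = (1 / t) * (f (fst p) * f (snd p) * exp (- t * norm (fst p - snd p)^2) - exp (- t) * (f (fst p) * f (snd p)))" for p
    unfolding frullani_weight_def frullani_kernel_def using True by (simp add: field_simps)
  then have "(\<integral>p. frullani_weight f p t \<partial>lborel2)
      = (1 / t) * (gauss_energy f t - exp (- t) * (\<integral>p. f (fst p) * f (snd p) \<partial>lborel2))"
    using ff ffg by (simp add: gauss_energy_def)
  then show ?thesis
    using True f0 by (simp add: integral_lborel2_tensor[OF f f])
qed (simp add: frullani_weight_def frullani_kernel_def)

lemma
  assumes f: "log_admissible f" and f0: "(\<integral>x. f x \<partial>lborel) = 0"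
  shows integrable_gauss_energy_div: "integrable lborel (\<lambda>t. indicator {0<..} t * (gauss_energy f t / t))"
    and log_energy_eq_integral_gauss_energy:
      "(\<integral>t. indicator {0<..} t * (gauss_energy f t / t) \<partial>lborel) = - 2 * log_energy f f"
proof -
  have [measurable]: "f \<in> borel_measurable borel"
    using f by (rule log_admissible_measurable)
  have W: "integrable (lborel2 \<Otimes>\<^sub>M lborel) (\<lambda>(p, t). frullani_weight f p t)"
    by (rule integrable_frullani_weight[OF f])
  have dp: "(\<integral>p. frullani_weight f p t \<partial>lborel2) = indicator {0<..} t * (gauss_energy f t / t)" for t
    using integral_frullani_weight_dp[OF log_admissible_integrable[OF f] f0] .
  show "integrable lborel (\<lambda>t. indicator {0<..} t * (gauss_energy f t / t))"
    using lborel2_lborel_real.integrable_snd[OF W] by (simp add: dp)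
  have "(\<integral>t. indicator {0<..} t * (gauss_energy f t / t) \<partial>lborel)
      = (\<integral>p. \<integral>t. frullani_weight f p t \<partial>lborel \<partial>lborel2)"
    using lborel2_lborel_real.Fubini_integral[OF W] by (simp add: dp)
  also have "\<dots> = (\<integral>p. - 2 * (f (fst p) * ln (norm (fst p - snd p)) * f (snd p)) \<partial>lborel2)"
  proof (rule integral_cong_AE)
    show "(\<lambda>p. \<integral>t. frullani_weight f p t \<partial>lborel) \<in> borel_measurable lborel2"
      using W by (intro lborel.borel_measurable_lebesgue_integral) (simp add: case_prod_beta')
    show "AE p in lborel2. (\<integral>t. frullani_weight f p t \<partial>lborel) = - 2 * (f (fst p) * ln (norm (fst p - snd p)) * f (snd p))"
      using AE_lborel2_off_diagonal by (auto elim!: eventually_mono simp: integral_frullani_weight_dt)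
  qed measurable
  also have "\<dots> = - 2 * log_energy f f"
    unfolding log_energy_def by simp
  finally show "(\<integral>t. indicator {0<..} t * (gauss_energy f t / t) \<partial>lborel) = - 2 * log_energy f f" .
qed

lemma log_energy_nonpos:
  assumes f: "log_admissible f" and f0: "(\<integral>x. f x \<partial>lborel) = 0"
  shows "log_energy f f \<le> 0"
proof -
  have "0 \<le> (\<integral>t. indicator {0<..} t * (gauss_energy f t / t) \<partial>lborel)"
    using gauss_energy_nonneg[OF log_admissible_integrable[OF f]]
    by (intro integral_nonneg_AE AE_I2) (simp split: split_indicator)
  then show ?thesis
    using log_energy_eq_integral_gauss_energy[OF f f0] by simp
qed

lemma gauss_transform_vanishes_if_log_energy_eq_0:
  assumes f: "log_admissible f" and f0: "(\<integral>x. f x \<partial>lborel) = 0" and J0: "log_energy f f = 0"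
  obtains s where "r \<le> s" "0 < s" "AE z in lborel. gauss_transform f s z = 0"
proof -
  have fi: "integrable lborel f"
    by (rule log_admissible_integrable[OF f])
  let ?g = "\<lambda>t. indicator {0<..} t * (gauss_energy f t / t)"
  have "AE t in lborel. ?g t = 0"
    using integral_nonneg_eq_0_iff_AE[OF integrable_gauss_energy_div[OF f f0]]
      log_energy_eq_integral_gauss_energy[OF f f0] J0 gauss_energy_nonneg[OF fi]
    by (auto intro!: AE_I2 simp: indicator_def)
  then have "\<exists>t\<in>{max r 0 + 1 .. max r 0 + 2}. ?g t = 0"
    by (rule AE_imp_bex_if_emeasure_nonzero) simp_all
  then obtain t where t: "t \<in> {max r 0 + 1 .. max r 0 + 2}" "?g t = 0"
    by blast
  then have "0 < t" "gauss_energy f t = 0"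
    by (auto simp: indicator_def)
  then have "(\<integral>z. (gauss_transform f (2 * t) z)^2 \<partial>lborel) = 0"
    using gauss_energy_eq[OF fi] gauss_mass_pos[of "4 * t"] by simp
  then have "AE z in lborel. gauss_transform f (2 * t) z = 0"
    using integral_nonneg_eq_0_iff_AE[OF integrable_gauss_transform_sq[OF fi \<open>0 < t\<close>]] by simp
  then show ?thesis
    using that[of "2 * t"] t by auto
qed

section \<open>Gaussian averages of indicators\<close>

definition gauss_tail :: "real \<Rightarrow> real \<Rightarrow> real" where
  "gauss_tail s d = (\<integral>w. indicator {w::pt. d \<le> norm w} w * exp (- s * norm w ^ 2) \<partial>lborel) / gauss_mass s"

definition gauss_average :: "pt set \<Rightarrow> real \<Rightarrow> pt \<Rightarrow> real" where
  "gauss_average B s x = (\<integral>z. indicator B z * exp (- s * norm (x - z)^2) \<partial>lborel) / gauss_mass s"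

lemma integrable_indicator_mult_gaussian:
  fixes x :: pt
  assumes S: "S \<in> sets borel" and s: "0 < s"
  shows "integrable lborel (\<lambda>z. indicator S z * exp (- s * norm (x - z)^2))"
  using integrable_gaussian_centered[OF s, of x]
proof (rule Bochner_Integration.integrable_bound)
  show "AE z in lborel. norm (indicator S z * exp (- s * norm (x - z)^2)) \<le> norm (exp (- s * norm (x - z)^2))"
    by (intro AE_I2) (simp add: indicator_def)
qed (use S in measurable)

lemma gauss_tail_nonneg: "0 < s \<Longrightarrow> 0 \<le> gauss_tail s d"
  unfolding gauss_tail_def by (intro divide_nonneg_pos integral_nonneg_AE gauss_mass_pos) auto

text \<open>Above radius d the Gaussian of width s is dominated by exp (-(s - 1) d^2) times the
  Gaussian of width 1, while its mass is at least that of the cube of side d/2.\<close>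

lemma gauss_tail_le:
  assumes s: "1 \<le> s" and d: "0 < d"
  shows "gauss_tail s d \<le> (gauss_mass 1 * exp (d^2) / (d^2 / 4)) * exp (- (s * (3/4 * d^2)))"
proof -
  have s0: "0 < s" using s by simp
  have "(\<integral>w. indicator {w::pt. d \<le> norm w} w * exp (- s * norm w ^ 2) \<partial>lborel)
      \<le> (\<integral>w. exp (- ((s - 1) * d^2)) * exp (- 1 * norm (w::pt) ^ 2) \<partial>lborel)"
  proof (rule integral_mono)
    show "integrable lborel (\<lambda>w::pt. indicator {w::pt. d \<le> norm w} w * exp (- s * norm w ^ 2))"
      using integrable_indicator_mult_gaussian[of "{w::pt. d \<le> norm w}" s 0] s0 by simp
    show "integrable lborel (\<lambda>w::pt. exp (- ((s - 1) * d^2)) * exp (- 1 * norm w ^ 2))"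
      using integrable_gaussian[of 1] by simp
    fix w :: pt
    have "exp (- s * norm w ^ 2) \<le> exp (- ((s - 1) * d^2)) * exp (- 1 * norm w ^ 2)" if "d \<le> norm w"
    proof -
      have "(s - 1) * d^2 \<le> (s - 1) * norm w ^ 2"
        using that s d by (intro mult_left_mono power_mono) auto
      then show ?thesis
        by (simp add: exp_add[symmetric] algebra_simps)
    qed
    then show "indicator {w. d \<le> norm w} w * exp (- s * norm w ^ 2) \<le> exp (- ((s - 1) * d^2)) * exp (- 1 * norm w ^ 2)"
      by (simp split: split_indicator)
  qed
  also have "\<dots> = exp (- ((s - 1) * d^2)) * gauss_mass 1"
    unfolding gauss_mass_def by simp
  finally have num: "(\<integral>w. indicator {w::pt. d \<le> norm w} w * exp (- s * norm w ^ 2) \<partial>lborel)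
      \<le> exp (- ((s - 1) * d^2)) * gauss_mass 1" .
  have den: "exp (- (s * d^2 / 4)) * (d^2 / 4) \<le> gauss_mass s"
    using gauss_mass_lower_bound[OF s0, of "d/4"] d by (simp add: power_divide power_mult_distrib field_simps)
  have "gauss_tail s d \<le> exp (- ((s - 1) * d^2)) * gauss_mass 1 / (exp (- (s * d^2 / 4)) * (d^2 / 4))"
    unfolding gauss_tail_def using num den d gauss_mass_pos[of 1] by (intro frac_le) auto
  also have "\<dots> = (gauss_mass 1 * exp (d^2) / (d^2 / 4)) * exp (- (s * (3/4 * d^2)))"
  proof -
    have "exp (- ((s - 1) * d^2)) = exp (d^2) * exp (- (s * d^2 / 4)) * exp (- (s * (3/4 * d^2)))"
      by (simp add: exp_add[symmetric] algebra_simps)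
    then show ?thesis
      using d by (simp add: field_simps)
  qed
  finally show ?thesis .
qed

lemma tendsto_gauss_tail:
  assumes d: "0 < d"
  shows "((\<lambda>s. gauss_tail s d) \<longlongrightarrow> 0) at_top"
proof (rule tendsto_sandwich[OF _ _ tendsto_const])
  show "\<forall>\<^sub>F s in at_top. 0 \<le> gauss_tail s d"
    using eventually_gt_at_top[of 0] by eventually_elim (rule gauss_tail_nonneg)
  show "\<forall>\<^sub>F s in at_top. gauss_tail s d \<le> (gauss_mass 1 * exp (d^2) / (d^2 / 4)) * exp (- (s * (3/4 * d^2)))"
    using eventually_ge_at_top[of 1] by eventually_elim (rule gauss_tail_le[OF _ d])
  show "((\<lambda>s. (gauss_mass 1 * exp (d^2) / (d^2 / 4)) * exp (- (s * (3/4 * d^2)))) \<longlongrightarrow> 0) at_top"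
    using d by (intro tendsto_mult_right_zero tendsto_exp_neg_linear_at_top) simp
qed

lemma integral_indicator_far_mult_gaussian:
  fixes x :: pt
  assumes s: "0 < s"
  shows "(\<integral>z. indicator {z. d \<le> norm (x - z)} z * exp (- s * norm (x - z)^2) \<partial>lborel) = gauss_tail s d * gauss_mass s"
proof -
  have "(\<integral>z. indicator {w::pt. d \<le> norm w} (- x + z) * exp (- s * norm (- x + z) ^ 2) \<partial>lborel)
      = (\<integral>w. indicator {w::pt. d \<le> norm w} w * exp (- s * norm w ^ 2) \<partial>lborel)"
    by (rule integral_lborel_translate) measurable
  then show ?thesis
    unfolding gauss_tail_def using gauss_mass_pos[OF s]
    by (simp add: norm_minus_commute indicator_def)
qed

lemma borel_measurable_gauss_average[measurable]:
  assumes [measurable]: "B \<in> sets borel"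
  shows "gauss_average B s \<in> borel_measurable lborel"
proof -
  have "(\<lambda>x. \<integral>z. indicator B z * exp (- s * norm (x - z)^2) \<partial>lborel) \<in> borel_measurable lborel"
    by (rule lborel.borel_measurable_lebesgue_integral) measurable
  then show ?thesis
    unfolding gauss_average_def by measurable
qed

lemma
  assumes B: "B \<in> sets borel" and s: "0 < s"
  shows gauss_average_nonneg: "0 \<le> gauss_average B s x"
    and gauss_average_le_1: "gauss_average B s x \<le> 1"
proof -
  show "0 \<le> gauss_average B s x"
    unfolding gauss_average_def by (intro divide_nonneg_pos integral_nonneg_AE gauss_mass_pos s) auto
  have "(\<integral>z. indicator B z * exp (- s * norm (x - z)^2) \<partial>lborel) \<le> (\<integral>z. exp (- s * norm (x - z)^2) \<partial>lborel)"
    using integrable_indicator_mult_gaussian[OF B s] integrable_gaussian_centered[OF s]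
    by (intro integral_mono) (auto simp: indicator_def)
  then show "gauss_average B s x \<le> 1"
    unfolding gauss_average_def using gauss_mass_pos[OF s] integral_gaussian_centered[of s x] by simp
qed

lemma one_minus_gauss_average_le_tail:
  assumes B: "B \<in> sets borel" and s: "0 < s" and d: "ball x d \<subseteq> B"
  shows "1 - gauss_average B s x \<le> gauss_tail s d"
proof -
  have "gauss_mass s - (\<integral>z. indicator B z * exp (- s * norm (x - z)^2) \<partial>lborel)
      = (\<integral>z. exp (- s * norm (x - z)^2) - indicator B z * exp (- s * norm (x - z)^2) \<partial>lborel)"
    using integrable_indicator_mult_gaussian[OF B s] integrable_gaussian_centered[OF s]
      integral_gaussian_centered[of s x] by simp
  also have "\<dots> \<le> (\<integral>z. indicator {z. d \<le> norm (x - z)} z * exp (- s * norm (x - z)^2) \<partial>lborel)"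
  proof (rule integral_mono)
    show "integrable lborel (\<lambda>z. exp (- s * norm (x - z)^2) - indicator B z * exp (- s * norm (x - z)^2))"
      using integrable_indicator_mult_gaussian[OF B s] integrable_gaussian_centered[OF s] by auto
    show "integrable lborel (\<lambda>z. indicator {z. d \<le> norm (x - z)} z * exp (- s * norm (x - z)^2))"
      by (rule integrable_indicator_mult_gaussian[OF _ s]) measurable
    fix z
    show "exp (- s * norm (x - z)^2) - indicator B z * exp (- s * norm (x - z)^2)
        \<le> indicator {z. d \<le> norm (x - z)} z * exp (- s * norm (x - z)^2)"
    proof (cases "z \<in> B")
      case False
      then have "z \<notin> ball x d"
        using d by blast
      then show ?thesis
        using False by (simp add: dist_norm)
    qed simp
  qed
  also have "\<dots> = gauss_tail s d * gauss_mass s"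
    by (rule integral_indicator_far_mult_gaussian[OF s])
  finally show ?thesis
    unfolding gauss_average_def using gauss_mass_pos[OF s] by (simp add: field_simps)
qed

lemma gauss_average_le_tail:
  assumes B: "B \<in> sets borel" and s: "0 < s" and d: "ball x d \<inter> B = {}"
  shows "gauss_average B s x \<le> gauss_tail s d"
proof -
  have "(\<integral>z. indicator B z * exp (- s * norm (x - z)^2) \<partial>lborel)
      \<le> (\<integral>z. indicator {z. d \<le> norm (x - z)} z * exp (- s * norm (x - z)^2) \<partial>lborel)"
  proof (rule integral_mono)
    show "integrable lborel (\<lambda>z. indicator B z * exp (- s * norm (x - z)^2))"
      by (rule integrable_indicator_mult_gaussian[OF B s])
    show "integrable lborel (\<lambda>z. indicator {z. d \<le> norm (x - z)} z * exp (- s * norm (x - z)^2))"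
      by (rule integrable_indicator_mult_gaussian[OF _ s]) measurable
    fix z
    show "indicator B z * exp (- s * norm (x - z)^2) \<le> indicator {z. d \<le> norm (x - z)} z * exp (- s * norm (x - z)^2)"
    proof (cases "z \<in> B")
      case True
      then have "z \<notin> ball x d"
        using d by blast
      then show ?thesis
        using True by (simp add: dist_norm)
    qed simp
  qed
  also have "\<dots> = gauss_tail s d * gauss_mass s"
    by (rule integral_indicator_far_mult_gaussian[OF s])
  finally show ?thesis
    unfolding gauss_average_def using gauss_mass_pos[OF s] by (simp add: field_simps)
qed

lemma tendsto_gauss_average_indicator:
  assumes B: "B \<in> sets borel" and s: "\<And>n. 0 < s n" and lim: "filterlim s at_top sequentially"
    and x: "x \<in> interior B \<or> x \<notin> closure B"
  shows "(\<lambda>n. gauss_average B (s n) x) \<longlonglongrightarrow> indicator B x"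
proof -
  have tail: "(\<lambda>n. gauss_tail (s n) d) \<longlonglongrightarrow> 0" if "0 < d" for d
    using filterlim_compose[OF tendsto_gauss_tail[OF that] lim] .
  consider "x \<in> interior B" | "x \<notin> closure B"
    using x by blast
  then show ?thesis
  proof cases
    case 1
    then obtain d where d: "0 < d" "ball x d \<subseteq> B"
      by (meson interior_subset mem_interior)
    have "(\<lambda>n. 1 - gauss_average B (s n) x) \<longlonglongrightarrow> 0"
      using gauss_average_le_1[OF B s] one_minus_gauss_average_le_tail[OF B s d(2)]
      by (intro tendsto_sandwich[OF _ _ tendsto_const tail[OF d(1)]]) auto
    then have "(\<lambda>n. 1 - (1 - gauss_average B (s n) x)) \<longlonglongrightarrow> 1 - 0"
      by (intro tendsto_diff tendsto_const)
    then show ?thesis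
      using 1 interior_subset by (auto simp: indicator_def)
  next
    case 2
    then obtain d where "0 < d" "ball x d \<subseteq> - closure B"
      using openE[of "- closure B" x] by blast
    then have d: "0 < d" "ball x d \<inter> B = {}"
      using closure_subset by blast+
    have "(\<lambda>n. gauss_average B (s n) x) \<longlonglongrightarrow> 0"
      using gauss_average_nonneg[OF B s] gauss_average_le_tail[OF B s d(2)]
      by (intro tendsto_sandwich[OF _ _ tendsto_const tail[OF d(1)]]) auto
    then show ?thesis
      using 2 closure_subset by (auto simp: indicator_def)
  qed
qed

section \<open>Vanishing of the logarithmic energy\<close>

lemma integral_mult_gauss_average:
  fixes f :: "pt \<Rightarrow> real"
  assumes f: "integrable lborel f" and B[measurable]: "B \<in> sets borel" and s: "0 < s"
  shows "(\<integral>x. f x * gauss_average B s x \<partial>lborel)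
    = (\<integral>z. indicator B z * gauss_transform f s z \<partial>lborel) / gauss_mass s"
proof -
  have [measurable]: "f \<in> borel_measurable borel"
    using f by auto
  define K where "K x z = f x * (indicator B z * exp (- s * norm (x - z)^2))" for x z :: pt
  have K_meas[measurable]: "(\<lambda>q. K (fst q) (snd q)) \<in> borel_measurable lborel2"
    unfolding K_def by measurable
  have "integrable lborel2 (\<lambda>q. K (fst q) (snd q))"
  proof (rule integrableI_bounded)
    have "(\<integral>\<^sup>+q. ennreal (norm (K (fst q) (snd q))) \<partial>lborel2) = (\<integral>\<^sup>+x. \<integral>\<^sup>+z. ennreal (norm (K x z)) \<partial>lborel \<partial>lborel)"
      using lborel.nn_integral_fst[of "\<lambda>q. ennreal (norm (K (fst q) (snd q)))" lborel] by simp
    also have "\<dots> \<le> (\<integral>\<^sup>+x. \<integral>\<^sup>+z. ennreal (norm (f x)) * ennreal (exp (- s * norm (x - z)^2)) \<partial>lborel \<partial>lborel)"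
      unfolding K_def
      by (intro nn_integral_mono) (simp add: abs_mult ennreal_mult[symmetric] ennreal_leI split: split_indicator)
    also have "\<dots> = (\<integral>\<^sup>+x. ennreal (norm (f x)) * ennreal (gauss_mass s) \<partial>lborel)"
      using nn_integral_gaussian_centered[OF s] by (simp add: nn_integral_cmult)
    also have "\<dots> < \<infinity>"
      using f by (simp add: nn_integral_multc integrable_iff_bounded ennreal_mult_less_top)
    finally show "(\<integral>\<^sup>+q. ennreal (norm (K (fst q) (snd q))) \<partial>lborel2) < \<infinity>" .
  qed simp
  then have K_int: "integrable lborel2 (case_prod K)"
    by (simp add: case_prod_beta')
  have "(\<integral>x. \<integral>z. K x z \<partial>lborel \<partial>lborel) = gauss_mass s * (\<integral>x. f x * gauss_average B s x \<partial>lborel)"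
    using gauss_mass_pos[OF s] by (simp add: K_def gauss_average_def)
  moreover have "(\<integral>z. \<integral>x. K x z \<partial>lborel \<partial>lborel) = (\<integral>z. indicator B z * gauss_transform f s z \<partial>lborel)"
  proof -
    have "K x z = indicator B z * (f x * exp (- s * norm (x - z)^2))" for x z
      unfolding K_def by (simp add: mult_ac)
    then show ?thesis
      unfolding gauss_transform_def by simp
  qed
  ultimately show ?thesis
    using lborel_pair.Fubini_integral[OF K_int] gauss_mass_pos[OF s] by (simp add: field_simps)
qed

lemma null_sets_cbox_diff_box: "(cbox a b - box a b :: 'a::euclidean_space set) \<in> null_sets lborel"
proof -
  have "emeasure lborel (cbox a b - box a b) = emeasure lborel (cbox a b) - emeasure lborel (box a b)"
    by (rule emeasure_Diff) (auto simp: box_subset_cbox emeasure_lborel_cbox_eq emeasure_lborel_box_eq)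
  also have "\<dots> = 0"
    by (simp add: emeasure_lborel_cbox_eq emeasure_lborel_box_eq)
  finally show ?thesis
    by auto
qed

lemma AE_tendsto_gauss_average_box:
  assumes s: "\<And>n. 0 < s n" and lim: "filterlim s at_top sequentially"
  shows "AE x in lborel. (\<lambda>n. gauss_average (box a b) (s n) x) \<longlonglongrightarrow> indicator (box a b) x"
  using AE_not_in[OF null_sets_cbox_diff_box[of a b]]
proof eventually_elim
  case (elim x)
  have "closure (box a b) \<subseteq> cbox a b"
    by (intro closure_minimal box_subset_cbox closed_cbox)
  then have "x \<in> interior (box a b) \<or> x \<notin> closure (box a b)"
    using elim interior_open[OF open_box] by blast
  then show ?case
    by (intro tendsto_gauss_average_indicator[OF _ s lim]) auto
qed

lemma integral_box_eq_0_if_gauss_transform_vanishes: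
  fixes f :: "pt \<Rightarrow> real"
  assumes f: "integrable lborel f"
    and vanish: "\<And>r. \<exists>s. r \<le> s \<and> 0 < s \<and> (AE z in lborel. gauss_transform f s z = 0)"
  shows "(\<integral>x. f x * indicator (box a b) x \<partial>lborel) = 0"
proof -
  have [measurable]: "f \<in> borel_measurable borel"
    using f by auto
  have "\<forall>n::nat. \<exists>s. real n \<le> s \<and> 0 < s \<and> (AE z in lborel. gauss_transform f s z = 0)"
    using vanish by blast
  then obtain s where "\<forall>n. real n \<le> s n \<and> 0 < s n \<and> (AE z in lborel. gauss_transform f (s n) z = 0)"
    by (rule choice[THEN exE])
  then have s: "\<And>n. real n \<le> s n" "\<And>n. 0 < s n" "\<And>n. AE z in lborel. gauss_transform f (s n) z = 0"
    by auto
  have lim: "filterlim s at_top sequentially"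
    by (rule filterlim_at_top_mono[OF filterlim_real_sequentially]) (use s(1) in auto)
  have "(\<lambda>n. \<integral>x. f x * gauss_average (box a b) (s n) x \<partial>lborel) \<longlonglongrightarrow> (\<integral>x. f x * indicator (box a b) x \<partial>lborel)"
  proof (rule integral_dominated_convergence[where w = "\<lambda>x. norm (f x)"])
    show "AE x in lborel. norm (f x * gauss_average (box a b) (s n) x) \<le> norm (f x)" for n
      using gauss_average_nonneg[of "box a b" "s n"] gauss_average_le_1[of "box a b" "s n"] s(2)
      by (intro AE_I2) (simp add: abs_mult mult_left_le)
    show "AE x in lborel. (\<lambda>n. f x * gauss_average (box a b) (s n) x) \<longlonglongrightarrow> f x * indicator (box a b) x"
      using AE_tendsto_gauss_average_box[OF s(2) lim] by eventually_elim (intro tendsto_mult tendsto_const)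
    show "(\<lambda>x. f x * indicator (box a b) x) \<in> borel_measurable lborel"
      by measurable
    show "(\<lambda>x. f x * gauss_average (box a b) (s n) x) \<in> borel_measurable lborel" for n
      by measurable
  qed (use f in simp)
  moreover have "(\<integral>x. f x * gauss_average (box a b) (s n) x \<partial>lborel) = 0" for n
  proof -
    have "(\<integral>z. indicator (box a b) z * gauss_transform f (s n) z \<partial>lborel) = 0"
      using s(3)[of n] by (intro integral_eq_zero_AE) (auto elim: eventually_mono)
    then show ?thesis
      using s(2) by (simp add: integral_mult_gauss_average[OF f])
  qed
  ultimately have "(\<lambda>n. 0) \<longlonglongrightarrow> (\<integral>x. f x * indicator (box a b) x \<partial>lborel)"
    by simp
  then show ?thesis
    using LIMSEQ_unique[OF tendsto_const] by metis
qed

lemma emeasure_density_eq_integral: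
  fixes g :: "'a::euclidean_space \<Rightarrow> real"
  assumes g: "integrable lborel g" "\<And>x. 0 \<le> g x" and A: "A \<in> sets borel"
  shows "emeasure (density lborel (\<lambda>x. ennreal (g x))) A = ennreal (\<integral>x. g x * indicator A x \<partial>lborel)"
proof -
  have "emeasure (density lborel (\<lambda>x. ennreal (g x))) A = (\<integral>\<^sup>+x. ennreal (g x * indicator A x) \<partial>lborel)"
    using g A by (subst emeasure_density) (auto intro!: nn_integral_cong split: split_indicator)
  also have "\<dots> = ennreal (\<integral>x. g x * indicator A x \<partial>lborel)"
    using g A by (intro nn_integral_eq_integral integrable_real_mult_indicator) auto
  finally show ?thesis .
qed

text \<open>The positive and negative parts of f define densities agreeing on all boxes,
  hence equal measures.\<close>

lemma AE_eq_0_if_integral_box_eq_0: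
  fixes f :: "'a::euclidean_space \<Rightarrow> real"
  assumes f: "integrable lborel f" and box: "\<And>a b. (\<integral>x. f x * indicator (box a b) x \<partial>lborel) = 0"
  shows "AE x in lborel. f x = 0"
proof -
  define fp where "fp x = max (f x) 0" for x
  define fn where "fn x = max (- f x) 0" for x
  have fp: "integrable lborel fp" "\<And>x. 0 \<le> fp x" and fn: "integrable lborel fn" "\<And>x. 0 \<le> fn x"
    using f unfolding fp_def fn_def by auto
  have f_eq: "f x = fp x - fn x" for x
    by (simp add: fp_def fn_def)
  have box_eq: "(\<integral>x. fp x * indicator (box a b) x \<partial>lborel) = (\<integral>x. fn x * indicator (box a b) x \<partial>lborel)" for a b
  proof -
    have "0 = (\<integral>x. fp x * indicator (box a b) x - fn x * indicator (box a b) x \<partial>lborel)"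
      using box[of a b] by (simp add: f_eq left_diff_distrib)
    then show ?thesis
      using fp fn by (simp add: integrable_real_mult_indicator)
  qed
  have "density lborel (\<lambda>x. ennreal (fp x)) = density lborel (\<lambda>x. ennreal (fn x))"
  proof (rule measure_eqI_generator_eq[where E = "range (\<lambda>(a, b). box a b)" and \<Omega> = UNIV
        and A = "\<lambda>i. box (- (real i *\<^sub>R One)) (real i *\<^sub>R One)"])
    show "Int_stable (range (\<lambda>(a, b). box a b :: 'a set))"
      by (auto simp: Int_stable_def box_Int_box)
    show "emeasure (density lborel (\<lambda>x. ennreal (fp x))) X = emeasure (density lborel (\<lambda>x. ennreal (fn x))) X"
      if "X \<in> range (\<lambda>(a, b). box a b)" for X
      using that fp fn box_eq by (auto simp: emeasure_density_eq_integral)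
    show "emeasure (density lborel (\<lambda>x. ennreal (fp x))) (box (- (real i *\<^sub>R One)) (real i *\<^sub>R One)) \<noteq> \<infinity>" for i
      using fp by (simp add: emeasure_density_eq_integral)
  qed (auto simp: borel_eq_box UN_box_eq_UNIV)
  then have "AE x in lborel. ennreal (fp x) = ennreal (fn x)"
    using fp fn by (intro sigma_finite_measure.density_unique[OF lborel.sigma_finite_measure_axioms]) auto
  then show ?thesis
    by (rule eventually_mono) (use fp fn in \<open>simp add: f_eq\<close>)
qed

lemma log_energy_neg:
  assumes f: "log_admissible f" and f0: "(\<integral>x. f x \<partial>lborel) = 0" and nz: "\<not> (AE x in lborel. f x = 0)"
  shows "log_energy f f < 0"
proof -
  have "log_energy f f \<noteq> 0"
  proof
    assume "log_energy f f = 0"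
    then have "\<exists>s. r \<le> s \<and> 0 < s \<and> (AE z in lborel. gauss_transform f s z = 0)" for r
      using gauss_transform_vanishes_if_log_energy_eq_0[OF f f0] by metis
    then have "(\<integral>x. f x * indicator (box a b) x \<partial>lborel) = 0" for a b
      using integral_box_eq_0_if_gauss_transform_vanishes[OF log_admissible_integrable[OF f]] by blast
    then show False
      using AE_eq_0_if_integral_box_eq_0[OF log_admissible_integrable[OF f]] nz by blast
  qed
  with log_energy_nonpos[OF f f0] show ?thesis
    by simp
qed

section \<open>The Thomas-Fermi functional\<close>

definition potential_energy :: "nat \<Rightarrow> (nat \<Rightarrow> pt) \<Rightarrow> (pt \<Rightarrow> real) \<Rightarrow> real" where
  "potential_energy K xs r = (\<integral>x. V_nuc K xs x * r x \<partial>lborel)"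

lemma borel_measurable_V_nuc[measurable]: "V_nuc K xs \<in> borel_measurable borel"
  unfolding V_nuc_def by measurable

lemma integrable_V_nuc_mult:
  assumes "log_admissible r"
  shows "integrable lborel (\<lambda>x. V_nuc K xs x * r x)"
proof -
  have "integrable lborel (\<lambda>x. - (\<Sum>i<K. ln (norm (xs i - x)) * r x))"
    using integrable_ln_norm_diff_mult[OF assms] by auto
  then show ?thesis
    unfolding V_nuc_def by (simp add: sum_distrib_right norm_minus_commute)
qed

lemma potential_energy_lincomb:
  assumes "log_admissible u" "log_admissible v"
  shows "potential_energy K xs (\<lambda>x. \<alpha> * u x + \<beta> * v x) = \<alpha> * potential_energy K xs u + \<beta> * potential_energy K xs v"
proof -
  have "potential_energy K xs (\<lambda>x. \<alpha> * u x + \<beta> * v x)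
      = (\<integral>x. \<alpha> * (V_nuc K xs x * u x) + \<beta> * (V_nuc K xs x * v x) \<partial>lborel)"
    unfolding potential_energy_def by (simp add: algebra_simps)
  then show ?thesis
    unfolding potential_energy_def using integrable_V_nuc_mult[OF assms(1)] integrable_V_nuc_mult[OF assms(2)]
    by simp
qed

lemma integral_lebesgue_mult_AE_eq:
  fixes g :: "pt \<Rightarrow> real"
  assumes g: "g \<in> borel_measurable borel" and s: "s \<in> borel_measurable lebesgue"
    and r: "r \<in> borel_measurable borel" and ae: "AE x in lebesgue. s x = r x"
  shows "(\<integral>x. g x * s x \<partial>lebesgue) = (\<integral>x. g x * r x \<partial>lborel)"
proof -
  have gl: "g \<in> borel_measurable lebesgue" and grl: "(\<lambda>x. g x * r x) \<in> borel_measurable lebesgue"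
    using g r by (auto intro!: measurable_completion)
  have "(\<integral>x. g x * s x \<partial>lebesgue) = (\<integral>x. g x * r x \<partial>lebesgue)"
    using ae by (intro integral_cong_AE borel_measurable_times[OF gl s] grl) (auto elim: eventually_mono)
  also have "\<dots> = (\<integral>x. g x * r x \<partial>lborel)"
    using g r by (intro integral_completion) simp
  finally show ?thesis .
qed

lemma E_TF_eq:
  assumes s: "s \<in> borel_measurable lebesgue" and r: "log_admissible r" and ae: "AE x in lebesgue. s x = r x"
  shows "E_TF K xs s = - potential_energy K xs r - 1/2 * log_energy r r"
proof -
  have [measurable]: "r \<in> borel_measurable borel"
    using r by (rule log_admissible_measurable)
  define h where "h x = (\<integral>y. ln (norm (x - y)) * r y \<partial>lborel)" for x
  have [measurable]: "h \<in> borel_measurable borel"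
    unfolding h_def by (rule lborel.borel_measurable_lebesgue_integral) measurable
  have pot: "(\<integral>x. V_nuc K xs x * s x \<partial>lebesgue) = potential_energy K xs r"
    unfolding potential_energy_def by (rule integral_lebesgue_mult_AE_eq) (simp_all add: s ae)
  have inner: "(\<integral>y. s x * ln (norm (x - y)) * s y \<partial>lebesgue) = s x * h x" for x
    unfolding h_def using integral_lebesgue_mult_AE_eq[of "\<lambda>y. s x * ln (norm (x - y))", OF _ s _ ae]
    by (simp add: mult.assoc)
  have "(\<integral>x. (\<integral>y. s x * ln (norm (x - y)) * s y \<partial>lebesgue) \<partial>lebesgue) = (\<integral>x. r x * h x \<partial>lborel)"
    unfolding inner using integral_lebesgue_mult_AE_eq[of h, OF _ s _ ae] by (simp add: mult.commute)
  also have "\<dots> = log_energy r r"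
    unfolding h_def by (rule log_energy_iterated[OF r r, symmetric])
  finally show ?thesis
    unfolding E_TF_def D_TF_def pot by simp
qed

lemma M_TF_integrable:
  assumes "s \<in> M_TF K"
  shows "integrable lebesgue s"
proof -
  have s: "s \<in> borel_measurable lebesgue" "AE x in lebesgue. 0 \<le> s x \<and> s x \<le> 1"
    and sL: "integrable lebesgue (\<lambda>x. s x * ln (2 + norm x) / ln 2)"
    using assms unfolding M_TF_def by auto
  show ?thesis
    using sL
  proof (rule Bochner_Integration.integrable_bound)
    show "AE x in lebesgue. norm (s x) \<le> norm (s x * ln (2 + norm x) / ln 2)"
      using s(2)
    proof eventually_elim
      case (elim x)
      then have "s x * ln 2 \<le> s x * ln (2 + norm x)"
        using log_weight_ge_ln2[of x] by (intro mult_left_mono) (auto simp: log_weight_def)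
      with elim show ?case
        by (simp add: field_simps)
    qed
  qed (rule s(1))
qed

lemma M_TF_convex:
  assumes s1: "s1 \<in> M_TF K" and s2: "s2 \<in> M_TF K" and t: "0 \<le> t" "t \<le> 1"
  shows "(\<lambda>x. t * s1 x + (1 - t) * s2 x) \<in> M_TF K"
proof -
  have "integrable lebesgue (\<lambda>x. t * (s1 x * ln (2 + norm x)) + (1 - t) * (s2 x * ln (2 + norm x)))"
    using s1 s2 unfolding M_TF_def by auto
  moreover have "(\<integral>x. t * s1 x + (1 - t) * s2 x \<partial>lebesgue) = real K"
    using M_TF_integrable[OF s1] M_TF_integrable[OF s2] s1 s2 unfolding M_TF_def by (simp add: algebra_simps)
  moreover have "AE x in lebesgue. 0 \<le> s1 x \<and> s1 x \<le> 1" "AE x in lebesgue. 0 \<le> s2 x \<and> s2 x \<le> 1"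
    using s1 s2 unfolding M_TF_def by auto
  then have "AE x in lebesgue. 0 \<le> t * s1 x + (1 - t) * s2 x \<and> t * s1 x + (1 - t) * s2 x \<le> 1"
  proof eventually_elim
    case (elim x)
    then show ?case
      using t convex_bound_le[of "s1 x" 1 "s2 x" t "1 - t"] by simp
  qed
  ultimately show ?thesis
    using s1 s2 unfolding M_TF_def by (auto simp: algebra_simps)
qed

lemma M_TF_borel_representative:
  assumes "s \<in> M_TF K"
  obtains r where "log_admissible r" "AE x in lebesgue. s x = r x" "(\<integral>x. r x \<partial>lborel) = real K"
proof -
  have s: "s \<in> borel_measurable lebesgue" and s01: "AE x in lebesgue. 0 \<le> s x \<and> s x \<le> 1"
    and sL: "integrable lebesgue (\<lambda>x. s x * ln (2 + norm x))" and sK: "(\<integral>x. s x \<partial>lebesgue) = real K"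
    using assms unfolding M_TF_def by auto
  obtain g where g: "g \<in> borel_measurable lborel" and "AE x in lborel. s x = g x"
    using completion_ex_borel_measurable_real[OF s] by blast
  define r where "r x = min 1 (max 0 (g x))" for x
  have [measurable]: "r \<in> borel_measurable borel"
    unfolding r_def using g by simp
  have "AE x in lborel. s x = r x"
    using \<open>AE x in lborel. s x = g x\<close> s01 unfolding r_def AE_completion_iff
    by eventually_elim auto
  then have ae: "AE x in lebesgue. s x = r x"
    by (rule AE_completion)
  have "integrable lebesgue (\<lambda>x. r x * log_weight x)"
    using sL ae by (subst integrable_cong_AE[where g = "\<lambda>x. s x * ln (2 + norm x)"])
      (auto intro: borel_measurable_times measurable_completion s elim: eventually_mono simp: log_weight_def)
  then have "integrable lborel (\<lambda>x. r x * log_weight x)"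
    by (subst (asm) integrable_completion) simp_all
  moreover have "\<bar>r x\<bar> \<le> 1" for x
    unfolding r_def by auto
  ultimately have "log_admissible r"
    unfolding log_admissible_def by auto
  moreover have "(\<integral>x. r x \<partial>lborel) = real K"
    using integral_lebesgue_mult_AE_eq[of "\<lambda>_. 1", OF _ s _ ae] sK by simp
  ultimately show ?thesis
    using that ae by blast
qed

lemma E_TF_strictly_convex:
  assumes s1: "s1 \<in> M_TF K" and s2: "s2 \<in> M_TF K" and t: "0 < t" "t < 1"
    and ne: "\<not> (AE x in lebesgue. s1 x = s2 x)"
  shows "E_TF K xs (\<lambda>x. t * s1 x + (1 - t) * s2 x) < t * E_TF K xs s1 + (1 - t) * E_TF K xs s2"
proof -
  obtain r1 where r1: "log_admissible r1" "AE x in lebesgue. s1 x = r1 x" "(\<integral>x. r1 x \<partial>lborel) = real K"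
    using M_TF_borel_representative[OF s1] by blast
  obtain r2 where r2: "log_admissible r2" "AE x in lebesgue. s2 x = r2 x" "(\<integral>x. r2 x \<partial>lborel) = real K"
    using M_TF_borel_representative[OF s2] by blast
  have meas: "s1 \<in> borel_measurable lebesgue" "s2 \<in> borel_measurable lebesgue"
    using s1 s2 unfolding M_TF_def by auto
  let ?d = "\<lambda>x. r1 x - r2 x"
  have d: "log_admissible ?d"
    using log_admissible_lincomb[OF r1(1) r2(1), of 1 "-1"] by simp
  have d0: "(\<integral>x. ?d x \<partial>lborel) = 0"
    using log_admissible_integrable[OF r1(1)] log_admissible_integrable[OF r2(1)] r1(3) r2(3) by simp
  have "\<not> (AE x in lborel. ?d x = 0)"
  proof
    assume "AE x in lborel. ?d x = 0"
    then have "AE x in lebesgue. ?d x = 0"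
      by (rule AE_completion)
    then have "AE x in lebesgue. s1 x = s2 x"
      using r1(2) r2(2) by eventually_elim simp
    with ne show False ..
  qed
  then have "log_energy ?d ?d < 0"
    by (rule log_energy_neg[OF d d0])
  have "AE x in lebesgue. t * s1 x + (1 - t) * s2 x = t * r1 x + (1 - t) * r2 x"
    using r1(2) r2(2) by eventually_elim simp
  then have mix: "E_TF K xs (\<lambda>x. t * s1 x + (1 - t) * s2 x)
      = - potential_energy K xs (\<lambda>x. t * r1 x + (1 - t) * r2 x)
        - 1/2 * log_energy (\<lambda>x. t * r1 x + (1 - t) * r2 x) (\<lambda>x. t * r1 x + (1 - t) * r2 x)"
    using meas by (intro E_TF_eq log_admissible_lincomb r1(1) r2(1)) auto
  have "E_TF K xs (\<lambda>x. t * s1 x + (1 - t) * s2 x) - (t * E_TF K xs s1 + (1 - t) * E_TF K xs s2)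
      = 1/2 * (t * (1 - t)) * log_energy ?d ?d"
    unfolding mix E_TF_eq[OF meas(1) r1(1,2)] E_TF_eq[OF meas(2) r2(1,2)]
      potential_energy_lincomb[OF r1(1) r2(1)] log_energy_convex_combination[OF r1(1) r2(1)]
    by (simp add: field_simps)
  also have "\<dots> < 0"
    using t \<open>log_energy ?d ?d < 0\<close> by (simp add: mult_pos_neg)
  finally show ?thesis
    by simp
qed

lemma E_TF_minimiser_unique:
  assumes s: "s1 \<in> M_TF K" "s2 \<in> M_TF K"
    and min: "\<forall>s \<in> M_TF K. E_TF K xs s1 \<le> E_TF K xs s" "\<forall>s \<in> M_TF K. E_TF K xs s2 \<le> E_TF K xs s"
  shows "AE x in lebesgue. s1 x = s2 x"
proof (rule ccontr)
  let ?m = "\<lambda>x. 1/2 * s1 x + (1 - 1/2) * s2 x"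
  assume "\<not> (AE x in lebesgue. s1 x = s2 x)"
  then have "E_TF K xs ?m < 1/2 * E_TF K xs s1 + (1 - 1/2) * E_TF K xs s2"
    using E_TF_strictly_convex[OF s, where t = "1/2"] by simp
  moreover have "?m \<in> M_TF K"
    using M_TF_convex[OF s, where t = "1/2"] by simp
  ultimately show False
    using min by fastforce
qed

theorem lemma3p3:
  fixes K :: nat and xs :: "nat \<Rightarrow> real ^ 2"
  assumes "K \<ge> 1"
  shows "(\<forall>s1 \<in> M_TF K. \<forall>s2 \<in> M_TF K. \<forall>t::real. 0 < t \<and> t < 1 \<longrightarrow>
            (\<lambda>x. t * s1 x + (1 - t) * s2 x) \<in> M_TF K \<and>
            (\<not> (AE x in lebesgue. s1 x = s2 x) \<longrightarrow>
              E_TF K xs (\<lambda>x. t * s1 x + (1 - t) * s2 x)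
                < t * E_TF K xs s1 + (1 - t) * E_TF K xs s2))
       \<and> (\<forall>s1 \<in> M_TF K. \<forall>s2 \<in> M_TF K.
            (\<forall>s \<in> M_TF K. E_TF K xs s1 \<le> E_TF K xs s) \<and>
            (\<forall>s \<in> M_TF K. E_TF K xs s2 \<le> E_TF K xs s) \<longrightarrow>
            (AE x in lebesgue. s1 x = s2 x))"
proof (intro conjI ballI allI impI)
  fix s1 s2 and t :: real
  assume "s1 \<in> M_TF K" "s2 \<in> M_TF K" "0 < t \<and> t < 1"
  then show "(\<lambda>x. t * s1 x + (1 - t) * s2 x) \<in> M_TF K"
    and "\<not> (AE x in lebesgue. s1 x = s2 x) \<Longrightarrow>
      E_TF K xs (\<lambda>x. t * s1 x + (1 - t) * s2 x) < t * E_TF K xs s1 + (1 - t) * E_TF K xs s2"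
    by (auto intro: M_TF_convex E_TF_strictly_convex)
qed (auto intro: E_TF_minimiser_unique)

end
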